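(* Let $$\Gamma=\left\langle\mathbb{Z}^3,\left(0,\begin{pmatrix}1&-1&0\\0&-1&0\\0&0&-1\end{pmatrix}\right)\right\rangle\subseteq\mathrm{Aff}(\mathbb{R}^3),$$ with holonomy group $F\subseteq\mathrm{GL}_3(\mathbb{Z})$ (of order $2$, generated by the displayed matrix), and let $\varphi=\xi_{(d,D)}\in\mathrm{Aut}(\Gamma)$. Define $\delta=1$ if the third component $d_3$ of $d$ is an integer and $\delta=0$ otherwise. Then $$R(\varphi)=\left(\frac12\sum_{A\in F}|\det(I_3-AD)|_\infty\right)+4\delta.$$
   Context: $\mathrm{Aff}(\mathbb{R}^3)=\mathbb{R}^3\rtimes\mathrm{GL}_3(\mathbb{R})$ with multiplication $(d_1,D_1)(d_2,D_2)=(d_1+D_1d_2,D_1D_2)$; $\mathbb{Z}^3$ denotes $\{(z,I_3)\mid z\in\mathbb{Z}^3\}$. For $(d,D)\in\mathrm{Aff}(\mathbb{R}^3)$, $\xi_{(d,D)}$ denotes $\gamma\mapsto(d,D)\gamma(d,D)^{-1}$; every automorphism of $\Gamma$ has this form (and $d$ is uniquely determined by the automorphism). $R(\varphi)\in\{1,2,\dots\}\cup\{\infty\}$ is the number of classes of the relation $g\sim g'\iff\exists h\in\Gamma: g=hg'\varphi(h)^{-1}$. For an integer $x$, $|x|_\infty=|x|$ if $x\neq0$ and $\infty$ if $x=0$. *)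

theory Defs
  imports "HOL-Analysis.Analysis" "HOL-Library.Extended_Real"
begin

text \<open>Elements of Aff(R^3) are pairs (d, D) with d a translation vector and D a 3x3 matrix
  (invertibility is imposed where needed).\<close>
type_synonym aff3 = "(real^3) \<times> (real^3^3)"

definition aff_mul :: "aff3 \<Rightarrow> aff3 \<Rightarrow> aff3" where
  "aff_mul g h = (fst g + snd g *v fst h, snd g ** snd h)"

definition aff_inv :: "aff3 \<Rightarrow> aff3" where
  "aff_inv g = (- (matrix_inv (snd g) *v fst g), matrix_inv (snd g))"

definition aff_one :: aff3 where
  "aff_one = (0, mat 1)"

definition Aff3 :: "aff3 set" where
  "Aff3 = {g. invertible (snd g)}"

definition xi :: "aff3 \<Rightarrow> aff3 \<Rightarrow> aff3" where
  "xi g \<gamma> = aff_mul (aff_mul g \<gamma>) (aff_inv g)"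

inductive_set gen_subgroup :: "aff3 set \<Rightarrow> aff3 set" for S where
  one: "aff_one \<in> gen_subgroup S"
| base: "x \<in> S \<Longrightarrow> x \<in> gen_subgroup S"
| mul: "x \<in> gen_subgroup S \<Longrightarrow> y \<in> gen_subgroup S \<Longrightarrow> aff_mul x y \<in> gen_subgroup S"
| inv: "x \<in> gen_subgroup S \<Longrightarrow> aff_inv x \<in> gen_subgroup S"

definition Z3 :: "aff3 set" where
  "Z3 = {(z, mat 1) | z. \<forall>i. z $ i \<in> \<int>}"

definition A0 :: "real^3^3" where
  "A0 = vector [vector [1, -1, 0], vector [0, -1, 0], vector [0, 0, -1]]"

definition Gamma :: "aff3 set" where
  "Gamma = gen_subgroup (Z3 \<union> {(0, A0)})"

definition holonomy :: "aff3 set \<Rightarrow> (real^3^3) set" where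
  "holonomy G = snd ` G"

definition reid_rel :: "aff3 set \<Rightarrow> (aff3 \<Rightarrow> aff3) \<Rightarrow> (aff3 \<times> aff3) set" where
  "reid_rel G \<phi> = {(g, g'). g \<in> G \<and> g' \<in> G \<and>
      (\<exists>h\<in>G. g = aff_mul (aff_mul h g') (aff_inv (\<phi> h)))}"

definition reidemeister_number :: "aff3 set \<Rightarrow> (aff3 \<Rightarrow> aff3) \<Rightarrow> enat" where
  "reidemeister_number G \<phi> =
     (if finite (G // reid_rel G \<phi>) then enat (card (G // reid_rel G \<phi>)) else \<infinity>)"

definition abs_inf :: "real \<Rightarrow> ereal" where
  "abs_inf x = (if x = 0 then \<infinity> else ereal \<bar>x\<bar>)"

end

theory Submission
  imports Defs
begin

text \<open>
  Every element of \<open>\<Gamma>\<close> is \<open>(z, I)\<close> or \<open>(z, A\<^sub>0)\<close> with \<open>z \<in> \<int>\<^sup>3\<close>, so an automorphism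
  \<open>\<xi>(d, D)\<close> has \<open>D \<in> GL\<^sub>3(\<int>)\<close> commuting with \<open>A\<^sub>0\<close> and \<open>t = d - A\<^sub>0 d \<in> \<int>\<^sup>3\<close>.
  Twisted conjugacy preserves the linear part \<open>B\<close>, and on the coset of \<open>B\<close> it identifies
  \<open>z\<close> with \<open>z + (I - BD)m\<close> and with \<open>(I - BD)m + A\<^sub>0 z - Bt\<close>. If \<open>det (I - BD) = 0\<close>, a
  left null vector of \<open>I - BD\<close> that is an eigenvector of \<open>A\<^sub>0\<close> yields an unbounded class
  invariant, so there are infinitely many classes. Otherwise the classes of the coset are
  the orbits of the involution \<open>z \<mapsto> A\<^sub>0 z - Bt\<close> on \<open>\<int>\<^sup>3/(I - BD)\<int>\<^sup>3\<close>, a group of order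
  \<open>|det (I - BD)|\<close>; the involution has four fixed points if \<open>d\<^sub>3 \<in> \<int>\<close> and none otherwise,
  so the coset contributes \<open>|det (I - BD)|/2 + 2\<delta>\<close> classes.
\<close>

section \<open>Counting equivalence classes\<close>

lemma image_equiv_class:
  assumes img: "f ` S = T" and rS: "r \<subseteq> S \<times> S" and rT: "r' \<subseteq> T \<times> T"
    and iff: "\<And>x y. x \<in> S \<Longrightarrow> y \<in> S \<Longrightarrow> (x, y) \<in> r \<longleftrightarrow> (f x, f y) \<in> r'"
    and x: "x \<in> S"
  shows "f ` (r``{x}) = r'``{f x}"
proof
  show "f ` (r``{x}) \<subseteq> r'``{f x}" using iff x rS by auto
  show "r'``{f x} \<subseteq> f ` (r``{x})"
  proof
    fix z assume "z \<in> r'``{f x}"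
    then have "(f x, z) \<in> r'" "z \<in> T" using rT by auto
    then obtain y where "y \<in> S" "z = f y" using img by auto
    then show "z \<in> f ` (r``{x})" using iff x \<open>(f x, z) \<in> r'\<close> by auto
  qed
qed

lemma quotient_image_bij_betw:
  assumes img: "f ` S = T" and rS: "r \<subseteq> S \<times> S" and rT: "r' \<subseteq> T \<times> T"
    and iff: "\<And>x y. x \<in> S \<Longrightarrow> y \<in> S \<Longrightarrow> (x, y) \<in> r \<longleftrightarrow> (f x, f y) \<in> r'"
  shows "bij_betw (image f) (S // r) (T // r')"
proof -
  note classes = image_equiv_class[OF assms]
  have "inj_on (image f) (S // r)"
  proof (rule inj_onI)
    fix C1 C2 assume "C1 \<in> S // r" "C2 \<in> S // r" "f ` C1 = f ` C2"
    then obtain x1 x2 where x: "x1 \<in> S" "x2 \<in> S" "C1 = r``{x1}" "C2 = r``{x2}"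
      by (auto elim!: quotientE)
    then have same: "r'``{f x1} = r'``{f x2}" using classes \<open>f ` C1 = f ` C2\<close> by auto
    have "(x1, y) \<in> r \<longleftrightarrow> (x2, y) \<in> r" for y
    proof (cases "y \<in> S")
      case True
      have "(f x1, f y) \<in> r' \<longleftrightarrow> (f x2, f y) \<in> r'" using same by blast
      then show ?thesis using iff x True by blast
    qed (use rS in auto)
    then show "C1 = C2" using x by auto
  qed
  moreover have "image f ` (S // r) = T // r'"
  proof
    show "image f ` (S // r) \<subseteq> T // r'"
      using classes img by (auto elim!: quotientE intro!: quotientI)
    show "T // r' \<subseteq> image f ` (S // r)"
    proof
      fix C assume "C \<in> T // r'"
      then obtain t where "t \<in> T" "C = r'``{t}" by (auto elim!: quotientE)
      then obtain x where "x \<in> S" "t = f x" using img by auto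
      then show "C \<in> image f ` (S // r)" using classes \<open>C = r'``{t}\<close>
        by (auto intro!: quotientI image_eqI[where x="r``{x}"])
    qed
  qed
  ultimately show ?thesis unfolding bij_betw_def ..
qed

lemma
  assumes "f ` S = T" "r \<subseteq> S \<times> S" "r' \<subseteq> T \<times> T"
    "\<And>x y. x \<in> S \<Longrightarrow> y \<in> S \<Longrightarrow> (x, y) \<in> r \<longleftrightarrow> (f x, f y) \<in> r'"
  shows card_quotient_image: "card (S // r) = card (T // r')"
    and finite_quotient_image_iff: "finite (S // r) \<longleftrightarrow> finite (T // r')"
  using quotient_image_bij_betw[OF assms] bij_betw_same_card bij_betw_finite by blast+

lemma quotient_Un_disjoint:
  assumes disj: "S1 \<inter> S2 = {}" and r: "r \<subseteq> S1 \<times> S1 \<union> S2 \<times> S2"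
    and refl: "\<And>x. x \<in> S1 \<union> S2 \<Longrightarrow> (x, x) \<in> r"
  shows "(S1 \<union> S2) // r = S1 // (r \<inter> S1 \<times> S1) \<union> S2 // (r \<inter> S2 \<times> S2)"
    and "S1 // (r \<inter> S1 \<times> S1) \<inter> S2 // (r \<inter> S2 \<times> S2) = {}"
proof -
  have "r``{x} = (r \<inter> S1 \<times> S1)``{x}" if "x \<in> S1" for x
    using that r disj by auto
  moreover have "r``{x} = (r \<inter> S2 \<times> S2)``{x}" if "x \<in> S2" for x
    using that r disj by auto
  ultimately show "(S1 \<union> S2) // r = S1 // (r \<inter> S1 \<times> S1) \<union> S2 // (r \<inter> S2 \<times> S2)"
    unfolding quotient_def by blast
  show "S1 // (r \<inter> S1 \<times> S1) \<inter> S2 // (r \<inter> S2 \<times> S2) = {}"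
  proof (rule ccontr)
    assume "S1 // (r \<inter> S1 \<times> S1) \<inter> S2 // (r \<inter> S2 \<times> S2) \<noteq> {}"
    then obtain x1 x2 where x: "x1 \<in> S1" "x2 \<in> S2"
      "(r \<inter> S1 \<times> S1)``{x1} = (r \<inter> S2 \<times> S2)``{x2}"
      unfolding quotient_def by blast
    then have "x1 \<in> (r \<inter> S2 \<times> S2)``{x2}" using refl by auto
    then show False using disj x by auto
  qed
qed

lemma card_quotient_involution_orbits:
  assumes fin: "finite X" and closed: "\<And>x. x \<in> X \<Longrightarrow> \<sigma> x \<in> X"
    and invol: "\<And>x. x \<in> X \<Longrightarrow> \<sigma> (\<sigma> x) = x"
  shows "2 * card (X // {(x, y). x \<in> X \<and> y \<in> X \<and> (y = x \<or> y = \<sigma> x)})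
           = card X + card {x\<in>X. \<sigma> x = x}"
proof -
  let ?r = "{(x, y). x \<in> X \<and> y \<in> X \<and> (y = x \<or> y = \<sigma> x)}"
  define F where "F = {x\<in>X. \<sigma> x = x}"
  define N where "N = X - F"
  have classes: "?r``{x} = {x, \<sigma> x}" if "x \<in> X" for x using that closed by auto
  have Q: "X // ?r = (\<lambda>x. {x}) ` F \<union> (\<lambda>x. {x, \<sigma> x}) ` N"
    unfolding quotient_def F_def N_def using classes by auto
  have fin_FN: "finite F" "finite N" using fin unfolding F_def N_def by auto
  have disj: "(\<lambda>x. {x}) ` F \<inter> (\<lambda>x. {x, \<sigma> x}) ` N = {}"
    unfolding F_def N_def by (auto simp: doubleton_eq_iff)
  have card_F: "card ((\<lambda>x. {x}) ` F) = card F" by (rule card_image) (auto simp: inj_on_def)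
  have N_closed: "\<sigma> x \<in> N" if "x \<in> N" for x using that closed invol unfolding N_def F_def by force
  have "2 * card ((\<lambda>x. {x, \<sigma> x}) ` N) = card (\<Union>((\<lambda>x. {x, \<sigma> x}) ` N))"
  proof (rule card_partition)
    show "finite ((\<lambda>x. {x, \<sigma> x}) ` N)" using fin_FN by auto
    show "finite (\<Union> ((\<lambda>x. {x, \<sigma> x}) ` N))" using fin_FN by auto
    show "\<And>c. c \<in> (\<lambda>x. {x, \<sigma> x}) ` N \<Longrightarrow> card c = 2"
      unfolding N_def F_def by (auto simp: card_insert_if split: if_split_asm)
    show "\<And>c1 c2. c1 \<in> (\<lambda>x. {x, \<sigma> x}) ` N \<Longrightarrow> c2 \<in> (\<lambda>x. {x, \<sigma> x}) ` N \<Longrightarrow> c1 \<noteq> c2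
        \<Longrightarrow> c1 \<inter> c2 = {}"
      unfolding N_def using invol by (auto, metis+)
  qed
  moreover have "\<Union>((\<lambda>x. {x, \<sigma> x}) ` N) = N" using N_closed by auto
  moreover have "card N = card X - card F" "card F \<le> card X"
    unfolding N_def F_def using fin by (auto intro: card_Diff_subset card_mono)
  ultimately show ?thesis
    unfolding Q using card_Un_disjoint[OF _ _ disj] fin_FN card_F F_def
    by (simp add: finite_imageI)
qed

definition transversal :: "('a \<Rightarrow> 'a \<Rightarrow> bool) \<Rightarrow> 'a set \<Rightarrow> bool" where
  "transversal c R \<longleftrightarrow> (\<forall>z. \<exists>p\<in>R. c z p) \<and> (\<forall>p\<in>R. \<forall>q\<in>R. c p q \<longrightarrow> p = q)"

lemma card_transversal_two_classes:
  assumes "equivp c" "transversal c R" "\<not> c a b"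
  shows "card {p\<in>R. c p a \<or> c p b} = 2"
proof -
  obtain pa pb where "pa \<in> R" "c a pa" "pb \<in> R" "c b pb"
    using assms(2) unfolding transversal_def by blast
  moreover have "c p a \<longleftrightarrow> p = pa" "c p b \<longleftrightarrow> p = pb" if "p \<in> R" for p
    using that calculation assms(1,2) unfolding transversal_def
    by (metis equivp_symp equivp_transp)+
  ultimately have "{p\<in>R. c p a \<or> c p b} = {pa, pb}" "pa \<noteq> pb"
    using assms(1,3) by (auto dest: equivp_symp equivp_transp)
  then show ?thesis by simp
qed

lemma transversal_retraction:
  assumes equiv: "equivp c" and R: "transversal c R"
  obtains g where "range g = R" "\<And>z z'. c z z' \<longleftrightarrow> g z = g z'" "\<And>p. p \<in> R \<Longrightarrow> g p = p"
proof -
  have csym: "\<And>z z'. c z z' \<Longrightarrow> c z' z" and ctrans: "\<And>x y z. c x y \<Longrightarrow> c y z \<Longrightarrow> c x z"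
    using equiv by (meson equivp_symp, meson equivp_transp)
  have ex: "\<And>z. \<exists>p\<in>R. c z p" and uniq: "\<And>p q. p\<in>R \<Longrightarrow> q\<in>R \<Longrightarrow> c p q \<Longrightarrow> p = q"
    using R unfolding transversal_def by blast+
  define g where "g z = (SOME p. p\<in>R \<and> c z p)" for z
  have g: "g z \<in> R \<and> c z (g z)" for z
    unfolding g_def using someI_ex[of "\<lambda>p. p\<in>R \<and> c z p"] ex by blast
  have g_R: "g p = p" if "p \<in> R" for p using uniq[of "g p" p] g[of p] that csym by blast
  have "c z z' \<longleftrightarrow> g z = g z'" for z z'
  proof
    assume "c z z'"
    then have "c (g z) (g z')" using g csym ctrans by meson
    then show "g z = g z'" using uniq g by blast
  next
    assume "g z = g z'"
    then show "c z z'" using g[of z] g[of z'] csym ctrans by metis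
  qed
  moreover have "range g = R"
  proof (intro equalityI subsetI)
    show "x \<in> R" if "x \<in> range g" for x using that g by auto
    show "x \<in> range g" if "x \<in> R" for x using that g_R by (metis rangeI)
  qed
  ultimately show ?thesis using that g_R by blast
qed

text \<open>Orbit counting for the involution induced by \<open>\<sigma>\<close> on the \<open>c\<close>-classes.\<close>
lemma
  fixes c :: "'a \<Rightarrow> 'a \<Rightarrow> bool" and \<sigma> :: "'a \<Rightarrow> 'a"
  assumes equiv: "equivp c" and compat: "\<And>z z'. c z z' \<Longrightarrow> c (\<sigma> z) (\<sigma> z')"
    and invol: "\<And>z. \<sigma> (\<sigma> z) = z" and fin: "finite R" and R: "transversal c R"
  shows finite_quotient_mod_involution: "finite (UNIV // {(z, z'). c z z' \<or> c z (\<sigma> z')})"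
    and card_quotient_mod_involution:
      "2 * card (UNIV // {(z, z'). c z z' \<or> c z (\<sigma> z')}) = card R + card {p\<in>R. c (\<sigma> p) p}"
proof -
  obtain g where g: "range g = R" "\<And>z z'. c z z' \<longleftrightarrow> g z = g z'" "\<And>p. p \<in> R \<Longrightarrow> g p = p"
    using transversal_retraction[OF equiv R] by blast
  define \<tau> where "\<tau> p = g (\<sigma> p)" for p
  have g_\<sigma>: "g (\<sigma> z) = \<tau> (g z)" for z
    unfolding \<tau>_def using g(2) compat by (metis g(1) g(3) rangeI)
  have \<tau>_R: "\<tau> p \<in> R" for p unfolding \<tau>_def using g(1) by blast
  have \<tau>_invol: "\<tau> (\<tau> p) = p" if "p \<in> R" for p
    using g_\<sigma>[of "\<sigma> p"] invol g(3) that unfolding \<tau>_def by metis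
  let ?rel = "{(z, z'). c z z' \<or> c z (\<sigma> z')}"
  let ?orb = "{(x, y). x \<in> R \<and> y \<in> R \<and> (y = x \<or> y = \<tau> x)}"
  have key: "(x, y) \<in> ?rel \<longleftrightarrow> (g x, g y) \<in> ?orb" for x y
  proof -
    have "(x, y) \<in> ?rel \<longleftrightarrow> g x = g y \<or> g x = \<tau> (g y)"
      using g(2) g_\<sigma> by auto
    also have "\<dots> \<longleftrightarrow> g y = g x \<or> g y = \<tau> (g x)"
      using \<tau>_invol g(1) by (metis rangeI)
    finally show ?thesis using g(1) by auto
  qed
  have sub: "?rel \<subseteq> UNIV \<times> UNIV" "?orb \<subseteq> R \<times> R" by auto
  note transfer = card_quotient_image[OF g(1) sub key] finite_quotient_image_iff[OF g(1) sub key]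
  have "finite (R // ?orb)" unfolding quotient_def using fin by auto
  then show "finite (UNIV // ?rel)" using transfer by auto
  have "{x\<in>R. \<tau> x = x} = {p\<in>R. c (\<sigma> p) p}"
    using g(2,3) unfolding \<tau>_def by auto
  then show "2 * card (UNIV // ?rel) = card R + card {p\<in>R. c (\<sigma> p) p}"
    using card_quotient_involution_orbits[OF fin \<tau>_R \<tau>_invol] transfer by auto
qed

section \<open>Congruences modulo integer lattices\<close>

definition lattice_cong2 :: "int \<Rightarrow> int \<Rightarrow> int \<Rightarrow> int \<Rightarrow> int \<times> int \<Rightarrow> int \<times> int \<Rightarrow> bool" where
  "lattice_cong2 p q r w u v \<longleftrightarrow>
     (\<exists>n1 n2. fst u - fst v = p * n1 + q * n2 \<and> snd u - snd v = r * n1 + w * n2)"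

lemma equivp_lattice_cong2: "equivp (lattice_cong2 p q r w)"
proof (rule equivpI)
  show "reflp (lattice_cong2 p q r w)"
    unfolding reflp_def lattice_cong2_def by (intro allI exI[of _ 0]) simp
  show "symp (lattice_cong2 p q r w)"
    unfolding symp_def lattice_cong2_def
    by (metis minus_diff_eq mult_minus_right minus_add_distrib)
  show "transp (lattice_cong2 p q r w)"
    unfolding transp_def lattice_cong2_def
  proof (intro allI impI, elim exE conjE)
    fix u v x :: "int \<times> int" and n1 n2 k1 k2
    assume H: "fst u - fst v = p * n1 + q * n2" "snd u - snd v = r * n1 + w * n2"
      "fst v - fst x = p * k1 + q * k2" "snd v - snd x = r * k1 + w * k2"
    show "\<exists>n1 n2. fst u - fst x = p * n1 + q * n2 \<and> snd u - snd x = r * n1 + w * n2"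
      by (rule exI[of _ "n1 + k1"], rule exI[of _ "n2 + k2"]) (use H in \<open>simp add: algebra_simps\<close>)
  qed
qed

lemma exists_residue_abs:
  fixes d v :: int assumes "d \<noteq> 0"
  shows "\<exists>k. 0 \<le> v - k * d \<and> v - k * d < \<bar>d\<bar>"
proof (cases "d > 0")
  case True
  then show ?thesis
    by (intro exI[of _ "v div d"]) (metis abs_of_pos minus_div_mult_eq_mod pos_mod_bound pos_mod_sign)
next
  case False
  then have "-d > 0" using assms by auto
  then show ?thesis
    by (intro exI[of _ "- (v div (-d))"])
      (metis abs_of_neg False assms linorder_neqE_linordered_idom minus_div_mult_eq_mod
        mult_minus_left mult_minus_right pos_mod_bound pos_mod_sign)
qed

lemma abs_mult_less_abs_imp_zero:
  fixes k d :: int assumes "\<bar>k * d\<bar> < \<bar>d\<bar>" shows "k = 0"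
proof (rule ccontr)
  assume "k \<noteq> 0"
  then have "1 \<le> \<bar>k\<bar>" by auto
  then have "\<bar>d\<bar> \<le> \<bar>k\<bar> * \<bar>d\<bar>" by (simp add: mult_le_cancel_right1)
  then show False using assms by (simp add: abs_mult)
qed

lemma det2_mult_eq_0:
  fixes \<alpha> \<beta> \<gamma> \<delta> x y :: int
  assumes "\<alpha> * x + \<beta> * y = 0" "\<gamma> * x + \<delta> * y = 0"
  shows "(\<alpha> * \<delta> - \<beta> * \<gamma>) * y = 0"
proof -
  have "(\<alpha> * \<delta> - \<beta> * \<gamma>) * y = \<alpha> * (\<gamma> * x + \<delta> * y) - \<gamma> * (\<alpha> * x + \<beta> * y)"
    by (simp add: algebra_simps)
  then show ?thesis using assms by simp
qed

lemma box_transversal: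
  fixes g h e :: int
  assumes g: "g \<noteq> 0" and e: "e \<noteq> 0"
  shows "transversal (\<lambda>v v'. \<exists>k l. fst v - fst v' = k * g \<and> snd v - snd v' = k * h + l * e)
           ({0..<\<bar>g\<bar>} \<times> {0..<\<bar>e\<bar>})"
  unfolding transversal_def
proof (intro conjI allI ballI impI)
  fix v :: "int \<times> int"
  obtain k where k: "0 \<le> fst v - k * g" "fst v - k * g < \<bar>g\<bar>"
    using exists_residue_abs[OF g] by blast
  obtain l where l: "0 \<le> snd v - k * h - l * e" "snd v - k * h - l * e < \<bar>e\<bar>"
    using exists_residue_abs[OF e] by fastforce
  show "\<exists>u\<in>{0..<\<bar>g\<bar>} \<times> {0..<\<bar>e\<bar>}.
      \<exists>k l. fst v - fst u = k * g \<and> snd v - snd u = k * h + l * e"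
  proof (rule bexI[of _ "(fst v - k * g, snd v - k * h - l * e)"])
    show "(fst v - k * g, snd v - k * h - l * e) \<in> {0..<\<bar>g\<bar>} \<times> {0..<\<bar>e\<bar>}" using k l by auto
    show "\<exists>k' l'. fst v - fst (fst v - k * g, snd v - k * h - l * e) = k' * g \<and>
        snd v - snd (fst v - k * g, snd v - k * h - l * e) = k' * h + l' * e"
      by (rule exI[of _ k], rule exI[of _ l]) simp
  qed
next
  fix u v assume box: "u \<in> {0..<\<bar>g\<bar>} \<times> {0..<\<bar>e\<bar>}" "v \<in> {0..<\<bar>g\<bar>} \<times> {0..<\<bar>e\<bar>}"
    and "\<exists>k l. fst u - fst v = k * g \<and> snd u - snd v = k * h + l * e"
  then obtain k l where kl: "fst u - fst v = k * g" "snd u - snd v = k * h + l * e" by blast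
  have "\<bar>k * g\<bar> < \<bar>g\<bar>" using box kl(1) by auto
  then have k0: "k = 0" by (rule abs_mult_less_abs_imp_zero)
  have "\<bar>l * e\<bar> < \<bar>e\<bar>" using box kl(2) k0 by auto
  then have "l = 0" by (rule abs_mult_less_abs_imp_zero)
  then show "u = v" using kl k0 by (simp add: prod_eq_iff)
qed

text \<open>
  With \<open>g = x p + y q\<close>, \<open>p = p' g\<close> and \<open>q = q' g\<close> the lattice is spanned by
  \<open>(g, r x + w y)\<close> and \<open>(0, w p' - r q')\<close>: its Hermite normal form.
\<close>
lemma lattice_cong2_hermite_iff:
  assumes xy: "x * p + y * q = g" and p': "p = p' * g" and q': "q = q' * g" and g: "g \<noteq> 0"
  shows "lattice_cong2 p q r w v v' \<longleftrightarrow>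
    (\<exists>k l. fst v - fst v' = k * g \<and> snd v - snd v' = k * (r * x + w * y) + l * (w * p' - r * q'))"
proof
  have one: "p' * x + q' * y = 1"
  proof -
    have "g * (p' * x + q' * y) = g * 1" using xy p' q' by (simp add: algebra_simps)
    then show ?thesis using g by simp
  qed
  assume "lattice_cong2 p q r w v v'"
  then obtain n1 n2 where n: "fst v - fst v' = p * n1 + q * n2" "snd v - snd v' = r * n1 + w * n2"
    unfolding lattice_cong2_def by auto
  have "(p' * n1 + q' * n2) * (r * x + w * y) + (- y * n1 + x * n2) * (w * p' - r * q')
      = (r * n1 + w * n2) * (p' * x + q' * y)" by (simp add: algebra_simps)
  then have "snd v - snd v' = (p' * n1 + q' * n2) * (r * x + w * y) + (- y * n1 + x * n2) * (w * p' - r * q')"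
    using one n by simp
  moreover have "fst v - fst v' = (p' * n1 + q' * n2) * g" using n p' q' by (simp add: algebra_simps)
  ultimately show "\<exists>k l. fst v - fst v' = k * g \<and>
      snd v - snd v' = k * (r * x + w * y) + l * (w * p' - r * q')" by blast
next
  assume "\<exists>k l. fst v - fst v' = k * g \<and> snd v - snd v' = k * (r * x + w * y) + l * (w * p' - r * q')"
  then obtain k l where kl: "fst v - fst v' = k * g"
    "snd v - snd v' = k * (r * x + w * y) + l * (w * p' - r * q')" by auto
  have "p * (k * x - l * q') + q * (k * y + l * p') = k * (x * p + y * q)"
    unfolding p' q' by (simp add: algebra_simps)
  then have "fst v - fst v' = p * (k * x - l * q') + q * (k * y + l * p')" using kl xy by simp
  moreover have "snd v - snd v' = r * (k * x - l * q') + w * (k * y + l * p')"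
    using kl by (simp add: algebra_simps)
  ultimately show "lattice_cong2 p q r w v v'" unfolding lattice_cong2_def by blast
qed

lemma lattice_cong2_transversal:
  fixes p q r w :: int
  assumes det: "p * w - q * r \<noteq> 0"
  obtains R where "finite R" "card R = nat \<bar>p * w - q * r\<bar>" "transversal (lattice_cong2 p q r w) R"
proof -
  define g where "g = gcd p q"
  have g: "g \<noteq> 0" using det unfolding g_def by auto
  obtain x y where xy: "x * p + y * q = g" using bezout_int[of p q] unfolding g_def by auto
  obtain p' where p': "p = p' * g" unfolding g_def by (metis gcd_dvd1 dvdE mult.commute)
  obtain q' where q': "q = q' * g" unfolding g_def by (metis gcd_dvd2 dvdE mult.commute)
  define e where "e = w * p' - r * q'"
  have ge: "g * e = p * w - q * r" unfolding e_def p' q' by (simp add: algebra_simps)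
  then have e: "e \<noteq> 0" using det by auto
  have "lattice_cong2 p q r w = (\<lambda>v v'. \<exists>k l. fst v - fst v' = k * g \<and> snd v - snd v' = k * (r * x + w * y) + l * e)"
    by (simp add: fun_eq_iff lattice_cong2_hermite_iff[OF xy p' q' g] e_def)
  then have "transversal (lattice_cong2 p q r w) ({0..<\<bar>g\<bar>} \<times> {0..<\<bar>e\<bar>})"
    using box_transversal[OF g e] by simp
  moreover have "card ({0..<\<bar>g\<bar>} \<times> {0..<\<bar>e\<bar>}) = nat \<bar>p * w - q * r\<bar>"
    unfolding card_cartesian_product using ge
    by (simp add: nat_mult_distrib[symmetric] abs_mult[symmetric])
  ultimately show ?thesis by (intro that[of "{0..<\<bar>g\<bar>} \<times> {0..<\<bar>e\<bar>}"]) simp_all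
qed

text \<open>
  For \<open>D = [[-1, b, c], [0, 2b - 1, 2c], [0, i, j]]\<close>, \<open>lattice_cong3 b c i j\<close> is congruence
  modulo \<open>(I - D) \<int>\<^sup>3\<close> and \<open>twist t\<^sub>0 e\<^sub>0\<close> is \<open>z \<mapsto> A\<^sub>0 z - (t\<^sub>0, 2t\<^sub>0, e\<^sub>0)\<close>.
\<close>
definition lattice_cong3 :: "int \<Rightarrow> int \<Rightarrow> int \<Rightarrow> int \<Rightarrow> int \<times> int \<times> int \<Rightarrow> int \<times> int \<times> int \<Rightarrow> bool" where
  "lattice_cong3 b c i j z z' \<longleftrightarrow> (\<exists>m1 m2 m3.
      fst z - fst z' = 2 * m1 - b * m2 - c * m3 \<and>
      fst (snd z) - fst (snd z') = (2 - 2 * b) * m2 - 2 * c * m3 \<and>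
      snd (snd z) - snd (snd z') = - i * m2 + (1 - j) * m3)"

definition twist :: "int \<Rightarrow> int \<Rightarrow> int \<times> int \<times> int \<Rightarrow> int \<times> int \<times> int" where
  "twist t0 e0 z = (fst z - fst (snd z) - t0, - fst (snd z) - 2 * t0, - snd (snd z) - e0)"

lemma equivp_lattice_cong3: "equivp (lattice_cong3 b c i j)"
proof (rule equivpI)
  show "reflp (lattice_cong3 b c i j)"
    unfolding reflp_def lattice_cong3_def by (intro allI exI[of _ 0]) simp
  show "symp (lattice_cong3 b c i j)"
    unfolding symp_def lattice_cong3_def
  proof (intro allI impI, elim exE conjE)
    fix z z' :: "int \<times> int \<times> int" and m1 m2 m3
    assume H: "fst z - fst z' = 2 * m1 - b * m2 - c * m3"
      "fst (snd z) - fst (snd z') = (2 - 2 * b) * m2 - 2 * c * m3"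
      "snd (snd z) - snd (snd z') = - i * m2 + (1 - j) * m3"
    show "\<exists>m1 m2 m3. fst z' - fst z = 2 * m1 - b * m2 - c * m3 \<and>
        fst (snd z') - fst (snd z) = (2 - 2 * b) * m2 - 2 * c * m3 \<and>
        snd (snd z') - snd (snd z) = - i * m2 + (1 - j) * m3"
      by (rule exI[of _ "- m1"], rule exI[of _ "- m2"], rule exI[of _ "- m3"])
        (use H in \<open>simp add: algebra_simps\<close>)
  qed
  show "transp (lattice_cong3 b c i j)"
    unfolding transp_def lattice_cong3_def
  proof (intro allI impI, elim exE conjE)
    fix x y z :: "int \<times> int \<times> int" and m1 m2 m3 k1 k2 k3
    assume H: "fst x - fst y = 2 * m1 - b * m2 - c * m3"
      "fst (snd x) - fst (snd y) = (2 - 2 * b) * m2 - 2 * c * m3"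
      "snd (snd x) - snd (snd y) = - i * m2 + (1 - j) * m3"
      "fst y - fst z = 2 * k1 - b * k2 - c * k3"
      "fst (snd y) - fst (snd z) = (2 - 2 * b) * k2 - 2 * c * k3"
      "snd (snd y) - snd (snd z) = - i * k2 + (1 - j) * k3"
    show "\<exists>m1 m2 m3. fst x - fst z = 2 * m1 - b * m2 - c * m3 \<and>
        fst (snd x) - fst (snd z) = (2 - 2 * b) * m2 - 2 * c * m3 \<and>
        snd (snd x) - snd (snd z) = - i * m2 + (1 - j) * m3"
      by (rule exI[of _ "m1 + k1"], rule exI[of _ "m2 + k2"], rule exI[of _ "m3 + k3"])
        (use H in \<open>simp add: algebra_simps\<close>)
  qed
qed

lemma lattice_cong3_twist:
  assumes "lattice_cong3 b c i j z z'"
  shows "lattice_cong3 b c i j (twist t0 e0 z) (twist t0 e0 z')"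
proof -
  obtain m1 m2 m3 where m: "fst z - fst z' = 2 * m1 - b * m2 - c * m3"
    "fst (snd z) - fst (snd z') = (2 - 2 * b) * m2 - 2 * c * m3"
    "snd (snd z) - snd (snd z') = - i * m2 + (1 - j) * m3"
    using assms unfolding lattice_cong3_def by blast
  have "fst (twist t0 e0 z) - fst (twist t0 e0 z') = (fst z - fst z') - (fst (snd z) - fst (snd z'))"
    "fst (snd (twist t0 e0 z)) - fst (snd (twist t0 e0 z')) = - (fst (snd z) - fst (snd z'))"
    "snd (snd (twist t0 e0 z)) - snd (snd (twist t0 e0 z')) = - (snd (snd z) - snd (snd z'))"
    unfolding twist_def by auto
  note H = this[unfolded m]
  show ?thesis unfolding lattice_cong3_def
    by (rule exI[of _ "m1 - m2"], rule exI[of _ "- m2"], rule exI[of _ "- m3"])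
      (use H in \<open>simp add: algebra_simps\<close>)
qed

lemma twist_twist [simp]: "twist t0 e0 (twist t0 e0 z) = z"
  unfolding twist_def by (simp add: prod_eq_iff)

lemma lattice_cong3_representative:
  assumes "transversal (lattice_cong2 (2 - 2 * b) (- 2 * c) (- i) (1 - j)) R"
  shows "\<exists>p\<in>{0, 1} \<times> R. lattice_cong3 b c i j z p"
proof -
  obtain x y w where z: "z = (x, y, w)" by (cases z) auto
  obtain u where u: "u \<in> R" "lattice_cong2 (2 - 2 * b) (- 2 * c) (- i) (1 - j) (y, w) u"
    using assms unfolding transversal_def by blast
  then obtain n1 n2 where n: "y - fst u = (2 - 2 * b) * n1 + (- 2 * c) * n2"
    "w - snd u = (- i) * n1 + (1 - j) * n2"
    unfolding lattice_cong2_def by auto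
  let ?x = "(x + b * n1 + c * n2) mod 2"
  have x: "x - ?x = 2 * ((x + b * n1 + c * n2) div 2) - b * n1 - c * n2"
    by (simp add: minus_mod_eq_mult_div[symmetric])
  have "lattice_cong3 b c i j z (?x, u)" unfolding lattice_cong3_def z
    by (rule exI[of _ "(x + b * n1 + c * n2) div 2"], rule exI[of _ n1], rule exI[of _ n2])
      (use n x in simp)
  moreover have "(?x, u) \<in> {0, 1} \<times> R"
  proof -
    have "0 \<le> ?x" "?x < 2" by simp_all
    then have "?x = 0 \<or> ?x = 1" by linarith
    then show ?thesis using u(1) by auto
  qed
  ultimately show ?thesis by (rule bexI)
qed

lemma lattice_cong3_transversal:
  assumes R: "transversal (lattice_cong2 (2 - 2 * b) (- 2 * c) (- i) (1 - j)) R"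
    and det: "(2 - 2 * b) * (1 - j) - (- 2 * c) * (- i) \<noteq> 0"
  shows "transversal (lattice_cong3 b c i j) ({0, 1} \<times> R)"
  unfolding transversal_def
proof (intro conjI allI ballI impI)
  show "\<exists>p\<in>{0, 1} \<times> R. lattice_cong3 b c i j z p" for z
    using lattice_cong3_representative[OF R] .
next
  fix p q assume pq: "p \<in> {0, 1} \<times> R" "q \<in> {0, 1} \<times> R" "lattice_cong3 b c i j p q"
  obtain x u x' u' where pq_eq: "p = (x, u)" "q = (x', u')" by (cases p, cases q) auto
  have p: "x = 0 \<or> x = 1" "u \<in> R" and q: "x' = 0 \<or> x' = 1" "u' \<in> R"
    using pq(1,2) pq_eq by auto
  obtain m1 m2 m3 where m: "x - x' = 2 * m1 - b * m2 - c * m3"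
    "fst u - fst u' = (2 - 2 * b) * m2 - 2 * c * m3"
    "snd u - snd u' = - i * m2 + (1 - j) * m3"
    using pq(3) unfolding lattice_cong3_def pq_eq by fastforce
  have "lattice_cong2 (2 - 2 * b) (- 2 * c) (- i) (1 - j) u u'"
    unfolding lattice_cong2_def by (rule exI[of _ m2], rule exI[of _ m3]) (use m in simp)
  then have u: "u = u'" using R p q unfolding transversal_def by blast
  have e1: "(2 - 2 * b) * m2 + (- 2 * c) * m3 = 0" "(- i) * m2 + (1 - j) * m3 = 0"
    using m u by auto
  have e2: "(- 2 * c) * m3 + (2 - 2 * b) * m2 = 0" "(1 - j) * m3 + (- i) * m2 = 0"
    using e1 by simp_all
  have "((2 - 2 * b) * (1 - j) - (- 2 * c) * (- i)) * m3 = 0" by (rule det2_mult_eq_0[OF e1])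
  then have m3: "m3 = 0" using det by (metis mult_eq_0_iff)
  have "((- 2 * c) * (- i) - (2 - 2 * b) * (1 - j)) * m2 = 0" by (rule det2_mult_eq_0[OF e2])
  moreover have "(- 2 * c) * (- i) - (2 - 2 * b) * (1 - j) \<noteq> 0" using det by linarith
  ultimately have "m2 = 0" by (metis mult_eq_0_iff)
  then have "x - x' = 2 * m1" using m m3 by simp
  then have "x = x'" using p(1) q(1) by presburger
  then show "p = q" using pq_eq u by simp
qed

lemma lattice_cong3_twist_self_iff_exists:
  "lattice_cong3 b c i j (twist t0 e0 (x, y, w)) (x, y, w) \<longleftrightarrow> (\<exists>m1 m2 m3.
      - y - t0 = 2 * m1 - b * m2 - c * m3 \<and> - 2 * y - 2 * t0 = (2 - 2 * b) * m2 - 2 * c * m3 \<and>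
      - 2 * w - e0 = - i * m2 + (1 - j) * m3)"
  unfolding lattice_cong3_def twist_def by (simp add: algebra_simps)

lemma lattice_cong3_twist_self_imp:
  assumes h: "1 - j = 2 * h" and fixed: "lattice_cong3 b c i j (twist t0 e0 (x, y, w)) (x, y, w)"
  obtains e' where "e0 = 2 * e'"
    "lattice_cong2 (2 - 2 * b) (- 2 * c) (- i) (1 - j) (y, w) (- t0, - e') \<or>
     lattice_cong2 (2 - 2 * b) (- 2 * c) (- i) (1 - j) (y, w) (c - t0, - h - e')"
proof -
  have hj: "j = 1 - 2 * h" using h by simp
  obtain m1 m2 m3 where m: "- y - t0 = 2 * m1 - b * m2 - c * m3"
    "- 2 * y - 2 * t0 = (2 - 2 * b) * m2 - 2 * c * m3" "- 2 * w - e0 = - i * m2 + (1 - j) * m3"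
    using fixed unfolding lattice_cong3_twist_self_iff_exists by blast
  have "(2 - 2 * b) * m2 = 2 * m2 - 2 * (b * m2)" by (simp add: algebra_simps)
  then have m2: "m2 = 2 * m1" using m(1,2) by linarith
  define e' where "e' = i * m1 - h * m3 - w"
  have e': "e0 = 2 * e'" using m(3) unfolding m2 hj e'_def by (simp add: algebra_simps)
  have A: "y - (- t0) = (2 - 2 * b) * (- m1) + c * m3"
    using m(1) unfolding m2 by (simp add: algebra_simps)
  have B: "w - (- e') = (- i) * (- m1) - h * m3"
    unfolding e'_def by simp
  consider n where "m3 = 2 * n" | n where "m3 = 2 * n + 1" by (metis evenE oddE)
  then show ?thesis
  proof cases
    case (1 n)
    have "lattice_cong2 (2 - 2 * b) (- 2 * c) (- i) (1 - j) (y, w) (- t0, - e')"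
      unfolding lattice_cong2_def fst_conv snd_conv
      by (rule exI[of _ "- m1"], rule exI[of _ "- n"]) (use A B 1 in \<open>simp add: hj algebra_simps\<close>)
    then show ?thesis using that e' by blast
  next
    case (2 n)
    have "lattice_cong2 (2 - 2 * b) (- 2 * c) (- i) (1 - j) (y, w) (c - t0, - h - e')"
      unfolding lattice_cong2_def fst_conv snd_conv
      by (rule exI[of _ "- m1"], rule exI[of _ "- n"]) (use A B 2 in \<open>simp add: hj algebra_simps\<close>)
    then show ?thesis using that e' by blast
  qed
qed

lemma lattice_cong3_twist_self_if:
  assumes h: "1 - j = 2 * h" and e': "e0 = 2 * e'"
    and cong2: "lattice_cong2 (2 - 2 * b) (- 2 * c) (- i) (1 - j) (y, w) (- t0, - e') \<or>
      lattice_cong2 (2 - 2 * b) (- 2 * c) (- i) (1 - j) (y, w) (c - t0, - h - e')"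
  shows "lattice_cong3 b c i j (twist t0 e0 (x, y, w)) (x, y, w)"
  unfolding lattice_cong3_twist_self_iff_exists
proof -
  have hj: "j = 1 - 2 * h" using h by simp
  from cong2 show "\<exists>m1 m2 m3. - y - t0 = 2 * m1 - b * m2 - c * m3 \<and>
      - 2 * y - 2 * t0 = (2 - 2 * b) * m2 - 2 * c * m3 \<and> - 2 * w - e0 = - i * m2 + (1 - j) * m3"
  proof
    assume "lattice_cong2 (2 - 2 * b) (- 2 * c) (- i) (1 - j) (y, w) (- t0, - e')"
    then obtain n1 n2 where n: "y + t0 = (2 - 2 * b) * n1 + (- 2 * c) * n2"
      "w + e' = (- i) * n1 + (1 - j) * n2"
      unfolding lattice_cong2_def by auto
    show ?thesis
      by (rule exI[of _ "- n1"], rule exI[of _ "- 2 * n1"], rule exI[of _ "- 2 * n2"])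
        (use n in \<open>simp add: e' algebra_simps\<close>)
  next
    assume "lattice_cong2 (2 - 2 * b) (- 2 * c) (- i) (1 - j) (y, w) (c - t0, - h - e')"
    then obtain n1 n2 where n: "y - (c - t0) = (2 - 2 * b) * n1 + (- 2 * c) * n2"
      "w + h + e' = (- i) * n1 + (1 - j) * n2"
      unfolding lattice_cong2_def by auto
    show ?thesis
      by (rule exI[of _ "- n1"], rule exI[of _ "- 2 * n1"], rule exI[of _ "1 - 2 * n2"])
        (use n in \<open>simp add: e' hj algebra_simps\<close>)
  qed
qed

lemma lattice_cong3_twist_self_iff:
  assumes "1 - j = 2 * h"
  shows "lattice_cong3 b c i j (twist t0 e0 (x, y, w)) (x, y, w) \<longleftrightarrow> (\<exists>e'. e0 = 2 * e' \<and>
    (lattice_cong2 (2 - 2 * b) (- 2 * c) (- i) (1 - j) (y, w) (- t0, - e') \<or>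
     lattice_cong2 (2 - 2 * b) (- 2 * c) (- i) (1 - j) (y, w) (c - t0, - h - e')))"
  using lattice_cong3_twist_self_imp[OF assms] lattice_cong3_twist_self_if[OF assms] by metis

lemma not_lattice_cong2_twist_fixed_points:
  assumes h: "1 - j = 2 * h" and det: "(2 - 2 * b) * (1 - j) - (- 2 * c) * (- i) \<noteq> 0"
  shows "\<not> lattice_cong2 (2 - 2 * b) (- 2 * c) (- i) (1 - j) (- t0, - e') (c - t0, - h - e')"
proof
  assume "lattice_cong2 (2 - 2 * b) (- 2 * c) (- i) (1 - j) (- t0, - e') (c - t0, - h - e')"
  then obtain n1 n2 where "- c = (2 - 2 * b) * n1 + (- 2 * c) * n2" "h = (- i) * n1 + (1 - j) * n2"
    unfolding lattice_cong2_def by auto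
  then have "(2 - 2 * b) * n1 + (- c) * (2 * n2 - 1) = 0" "(- i) * n1 + h * (2 * n2 - 1) = 0"
    using h by (simp_all add: algebra_simps)
  from det2_mult_eq_0[OF this] have "((2 - 2 * b) * h - (- c) * (- i)) * (2 * n2 - 1) = 0" .
  moreover have "(2 - 2 * b) * (1 - j) - (- 2 * c) * (- i) = 2 * ((2 - 2 * b) * h - (- c) * (- i))"
    unfolding h by (simp add: algebra_simps)
  then have "(2 - 2 * b) * h - (- c) * (- i) \<noteq> 0" using det by (metis mult_zero_right)
  ultimately have "2 * n2 - 1 = 0" by simp
  then show False by presburger
qed

lemma
  assumes odd: "odd j" and det: "(2 - 2 * b) * (1 - j) - (- 2 * c) * (- i) \<noteq> 0"
  shows finite_lattice_cong3_twisted_classes: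
      "finite (UNIV // {(z, z'). lattice_cong3 b c i j z z' \<or> lattice_cong3 b c i j z (twist t0 e0 z')})"
    and card_lattice_cong3_twisted_classes:
      "card (UNIV // {(z, z'). lattice_cong3 b c i j z z' \<or> lattice_cong3 b c i j z (twist t0 e0 z')})
         = nat \<bar>(2 - 2 * b) * (1 - j) - (- 2 * c) * (- i)\<bar> + (if even e0 then 2 else 0)"
proof -
  let ?cong2 = "lattice_cong2 (2 - 2 * b) (- 2 * c) (- i) (1 - j)"
  have "even (1 - j)" using odd by simp
  then obtain h where h: "1 - j = 2 * h" by (elim evenE)
  obtain R where R: "finite R" "card R = nat \<bar>(2 - 2 * b) * (1 - j) - (- 2 * c) * (- i)\<bar>"
    "transversal ?cong2 R"
    using lattice_cong2_transversal[OF det] by blast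
  note R3 = lattice_cong3_transversal[OF R(3) det]
  note count = finite_quotient_mod_involution card_quotient_mod_involution
  note count = count[OF equivp_lattice_cong3 lattice_cong3_twist twist_twist _ R3, of t0 e0]
  show "finite (UNIV // {(z, z'). lattice_cong3 b c i j z z' \<or> lattice_cong3 b c i j z (twist t0 e0 z')})"
    using count(1) R(1) by simp
  define F where "F = {u\<in>R. \<exists>e'. e0 = 2 * e' \<and> (?cong2 u (- t0, - e') \<or> ?cong2 u (c - t0, - h - e'))}"
  have "{p\<in>{0, 1} \<times> R. lattice_cong3 b c i j (twist t0 e0 p) p} = {0, 1} \<times> F"
    unfolding F_def using lattice_cong3_twist_self_iff[OF h] by auto
  then have "card {p\<in>{0, 1} \<times> R. lattice_cong3 b c i j (twist t0 e0 p) p} = 2 * card F"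
    by (simp add: card_cartesian_product)
  moreover have "card F = (if even e0 then 2 else 0)"
  proof (cases "even e0")
    case True
    then obtain e' where e': "e0 = 2 * e'" by blast
    then have "F = {u\<in>R. ?cong2 u (- t0, - e') \<or> ?cong2 u (c - t0, - h - e')}"
      unfolding F_def by auto
    also have "card \<dots> = 2"
      by (intro card_transversal_two_classes equivp_lattice_cong2 R(3)
          not_lattice_cong2_twist_fixed_points[OF h det])
    finally show ?thesis using True by simp
  next
    case False
    then have "F = {}" unfolding F_def by auto
    then show ?thesis using False by simp
  qed
  ultimately show "card (UNIV // {(z, z'). lattice_cong3 b c i j z z' \<or> lattice_cong3 b c i j z (twist t0 e0 z')})
      = nat \<bar>(2 - 2 * b) * (1 - j) - (- 2 * c) * (- i)\<bar> + (if even e0 then 2 else 0)"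
    using count(2) R(1,2) by (simp add: card_cartesian_product)
qed

section \<open>The group \<open>\<Gamma>\<close> and its automorphisms\<close>

definition int_vecs :: "(real^3) set" where
  "int_vecs = {z. \<forall>i. z $ i \<in> \<int>}"

lemma int_vecs_0 [simp]: "0 \<in> int_vecs"
  and int_vecs_add: "z \<in> int_vecs \<Longrightarrow> w \<in> int_vecs \<Longrightarrow> z + w \<in> int_vecs"
  and int_vecs_minus: "z \<in> int_vecs \<Longrightarrow> - z \<in> int_vecs"
  unfolding int_vecs_def by simp_all

lemma A0_nth [simp]:
  "A0$1$1 = 1" "A0$1$2 = -1" "A0$1$3 = 0"
  "A0$2$1 = 0" "A0$2$2 = -1" "A0$2$3 = 0"
  "A0$3$1 = 0" "A0$3$2 = 0" "A0$3$3 = -1"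
  unfolding A0_def by simp_all

lemma mat1_nth [simp]:
  "(mat 1::real^3^3)$1$1 = 1" "(mat 1::real^3^3)$1$2 = 0" "(mat 1::real^3^3)$1$3 = 0"
  "(mat 1::real^3^3)$2$1 = 0" "(mat 1::real^3^3)$2$2 = 1" "(mat 1::real^3^3)$2$3 = 0"
  "(mat 1::real^3^3)$3$1 = 0" "(mat 1::real^3^3)$3$2 = 0" "(mat 1::real^3^3)$3$3 = 1"
  by (simp_all add: mat_def)

lemma mat3_eq_iff: "(M::real^3^3) = N \<longleftrightarrow>
  M$1$1 = N$1$1 \<and> M$1$2 = N$1$2 \<and> M$1$3 = N$1$3 \<and>
  M$2$1 = N$2$1 \<and> M$2$2 = N$2$2 \<and> M$2$3 = N$2$3 \<and>
  M$3$1 = N$3$1 \<and> M$3$2 = N$3$2 \<and> M$3$3 = N$3$3"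
  by (simp add: vec_eq_iff forall_3)

lemma vec3_eq_iff: "(x::real^3) = y \<longleftrightarrow> x$1 = y$1 \<and> x$2 = y$2 \<and> x$3 = y$3"
  by (simp add: vec_eq_iff forall_3)

lemma matrix_matrix_mult_3:
  "((M::real^3^3) ** N)$i$k = M$i$1 * N$1$k + M$i$2 * N$2$k + M$i$3 * N$3$k"
  by (simp add: matrix_matrix_mult_def sum_3)

lemma matrix_vector_mult_3: "((M::real^3^3) *v x)$i = M$i$1 * x$1 + M$i$2 * x$2 + M$i$3 * x$3"
  by (simp add: matrix_vector_mult_def sum_3)

lemma matrix_vector_mult_uminus_right: "(A::real^'n^'m) *v (- x) = - (A *v x)"
  by (metis diff_0 matrix_vector_mult_0_right matrix_vector_mult_diff_distrib)

lemma matrix_diff_rdistrib: "((A::'a::ring_1^'n^'m) - B) ** C = A ** C - B ** C"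
  by (simp add: vec_eq_iff matrix_matrix_mult_def sum_subtractf left_diff_distrib)

lemma matrix_diff_ldistrib: "(C::'a::ring_1^'n^'m) ** (A - B) = C ** A - C ** B"
  by (simp add: vec_eq_iff matrix_matrix_mult_def sum_subtractf right_diff_distrib)

lemma matrix_inv_invertible:
  assumes "invertible (A::'a::semiring_1^'n^'n)"
  shows "A ** matrix_inv A = mat 1" "matrix_inv A ** A = mat 1"
  using someI_ex[OF assms[unfolded invertible_def]] unfolding matrix_inv_def by auto

lemma matrix_inv_eqI:
  fixes A B :: "'a::semiring_1^'n^'n"
  assumes "A ** B = mat 1" "B ** A = mat 1"
  shows "matrix_inv A = B"
proof -
  have "invertible A" using assms unfolding invertible_def by blast
  then have "matrix_inv A = matrix_inv A ** (A ** B)" using assms by simp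
  also have "\<dots> = B" using matrix_inv_invertible[OF \<open>invertible A\<close>] by (simp add: matrix_mul_assoc)
  finally show ?thesis .
qed

lemma A0_mult_A0 [simp]: "A0 ** A0 = mat 1"
  by (simp add: mat3_eq_iff matrix_matrix_mult_3)

lemma A0_mult_A0_vec [simp]: "A0 *v (A0 *v x) = x"
  by (simp add: matrix_vector_mul_assoc)

lemma A0_neq_mat1: "A0 \<noteq> mat 1"
  by (simp add: mat3_eq_iff)

lemma matrix_inv_A0 [simp]: "matrix_inv A0 = A0"
  by (rule matrix_inv_eqI) simp_all

lemma matrix_inv_mat1 [simp]: "matrix_inv (mat 1::real^3^3) = mat 1"
  by (rule matrix_inv_eqI) simp_all

lemma A0_mult_vec_nth [simp]: "(A0 *v z)$1 = z$1 - z$2" "(A0 *v z)$2 = - z$2" "(A0 *v z)$3 = - z$3"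
  by (simp_all add: matrix_vector_mult_3)

lemma A0_int_vecs: "z \<in> int_vecs \<Longrightarrow> A0 *v z \<in> int_vecs"
  unfolding int_vecs_def by (simp add: forall_3)

lemma Gamma_eq: "Gamma = {(z, B). z \<in> int_vecs \<and> (B = mat 1 \<or> B = A0)}"
proof
  show "Gamma \<subseteq> {(z, B). z \<in> int_vecs \<and> (B = mat 1 \<or> B = A0)}"
  proof
    fix g assume "g \<in> Gamma"
    then show "g \<in> {(z, B). z \<in> int_vecs \<and> (B = mat 1 \<or> B = A0)}"
      unfolding Gamma_def
    proof (induction rule: gen_subgroup.induct)
      case one then show ?case by (simp add: aff_one_def)
    next
      case (base x) then show ?case by (auto simp: Z3_def int_vecs_def)
    next
      case (mul x y) then show ?case by (auto simp: aff_mul_def int_vecs_add A0_int_vecs)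
    next
      case (inv x) then show ?case
        by (auto simp: aff_inv_def int_vecs_minus A0_int_vecs)
    qed
  qed
  show "{(z, B). z \<in> int_vecs \<and> (B = mat 1 \<or> B = A0)} \<subseteq> Gamma"
  proof clarify
    fix z :: "real^3" and B :: "real^3^3"
    assume z: "z \<in> int_vecs" and B: "B = mat 1 \<or> B = A0"
    have z_Gamma: "(z, mat 1) \<in> Gamma" unfolding Gamma_def
      by (rule gen_subgroup.base) (use z in \<open>auto simp: Z3_def int_vecs_def\<close>)
    have "(0, A0) \<in> Gamma" unfolding Gamma_def by (rule gen_subgroup.base) simp
    then have "aff_mul (z, mat 1) (0, A0) \<in> Gamma" using z_Gamma unfolding Gamma_def
      by (rule gen_subgroup.mul[rotated])
    then show "(z, B) \<in> Gamma" using B z_Gamma by (auto simp: aff_mul_def)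
  qed
qed

lemma mem_Gamma_iff: "(z, B) \<in> Gamma \<longleftrightarrow> z \<in> int_vecs \<and> (B = mat 1 \<or> B = A0)"
  unfolding Gamma_eq by simp

lemma holonomy_Gamma: "holonomy Gamma = {mat 1, A0}"
  unfolding holonomy_def
proof
  show "snd ` Gamma \<subseteq> {mat 1, A0}" by (auto simp: Gamma_eq)
  have "(0, mat 1) \<in> Gamma" "(0, A0) \<in> Gamma" by (simp_all add: mem_Gamma_iff)
  then show "{mat 1, A0} \<subseteq> snd ` Gamma" by force
qed

lemma xi_eq:
  "xi (d, D) (m, B) = (d + D *v m - (D ** B ** matrix_inv D) *v d, D ** B ** matrix_inv D)"
  unfolding xi_def aff_mul_def aff_inv_def
  by (simp add: matrix_vector_mult_uminus_right matrix_vector_mul_assoc matrix_mul_assoc)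

lemma Ints_det_3:
  fixes M :: "real^3^3" assumes "\<And>i k. M$i$k \<in> \<int>"
  shows "det M \<in> \<int>"
  unfolding det_3 using assms by (intro Ints_diff Ints_add Ints_mult) auto

lemma Ints_matrix_nth:
  fixes M :: "real^3^3" assumes "\<And>z. z \<in> int_vecs \<Longrightarrow> M *v z \<in> int_vecs"
  shows "M$i$k \<in> \<int>"
proof -
  have e: "vector [1,0,0] \<in> int_vecs" "vector [0,1,0] \<in> int_vecs" "vector [0,0,1] \<in> int_vecs"
    unfolding int_vecs_def by (simp_all add: forall_3)
  have "(M *v vector [1,0,0])$i \<in> \<int>" "(M *v vector [0,1,0])$i \<in> \<int>" "(M *v vector [0,0,1])$i \<in> \<int>"
    using assms[OF e(1)] assms[OF e(2)] assms[OF e(3)] unfolding int_vecs_def by auto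
  then have "M$i$1 \<in> \<int>" "M$i$2 \<in> \<int>" "M$i$3 \<in> \<int>" by (simp_all add: matrix_vector_mult_3)
  then show ?thesis using exhaust_3[of k] by auto
qed

lemma Ints_mult_eq_1_imp:
  fixes x y :: real
  assumes "x \<in> \<int>" "y \<in> \<int>" "x * y = 1"
  shows "x = 1 \<or> x = -1"
proof -
  obtain p q where "x = of_int p" "y = of_int q" using assms(1,2) by (auto elim!: Ints_cases)
  with \<open>x * y = 1\<close> have "p * q = 1" by (metis of_int_eq_1_iff of_int_mult)
  then have "p = 1 \<or> p = -1" by (auto simp: zmult_eq_1_iff)
  then show ?thesis using \<open>x = of_int p\<close> by auto
qed

locale Gamma_automorphism =
  fixes d :: "real^3" and D :: "real^3^3"
  assumes invertible: "invertible D" and bij: "bij_betw (xi (d, D)) Gamma Gamma"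
begin

lemmas D_matrix_inv = matrix_inv_invertible[OF invertible]

lemma xi_mat1: "xi (d, D) (m, mat 1) = (D *v m, mat 1)"
  unfolding xi_eq using D_matrix_inv by simp

lemma xi_Gamma: "g \<in> Gamma \<Longrightarrow> xi (d, D) g \<in> Gamma"
  using bij unfolding bij_betw_def by auto

lemma D_int_vecs: "z \<in> int_vecs \<Longrightarrow> D *v z \<in> int_vecs"
  using xi_Gamma[of "(z, mat 1)"] by (simp add: xi_mat1 mem_Gamma_iff)

text \<open>\<open>\<xi>\<close> must map the generator \<open>(0, A\<^sub>0)\<close> to a non-translation.\<close>
lemma D_A0_D_inv: "D ** A0 ** matrix_inv D = A0"
proof -
  have "xi (d, D) (0, A0) \<in> Gamma" using xi_Gamma by (simp add: mem_Gamma_iff)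
  then have cases: "D ** A0 ** matrix_inv D = mat 1 \<or> D ** A0 ** matrix_inv D = A0"
    by (simp add: xi_eq mem_Gamma_iff)
  have "D ** A0 ** matrix_inv D \<noteq> mat 1"
  proof
    assume "D ** A0 ** matrix_inv D = mat 1"
    then have "matrix_inv D ** (D ** A0 ** matrix_inv D) ** D = matrix_inv D ** D" by simp
    moreover have "matrix_inv D ** (D ** A0 ** matrix_inv D) ** D
        = (matrix_inv D ** D) ** A0 ** (matrix_inv D ** D)" by (simp add: matrix_mul_assoc)
    ultimately have "A0 = mat 1" using D_matrix_inv by simp
    then show False using A0_neq_mat1 by simp
  qed
  then show ?thesis using cases by auto
qed

lemma D_A0_commute: "D ** A0 = A0 ** D"
proof -
  have "D ** A0 = (D ** A0 ** matrix_inv D) ** D"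
    using D_matrix_inv by (simp add: matrix_mul_assoc[symmetric])
  then show ?thesis using D_A0_D_inv by simp
qed

definition transl :: "real^3" where
  "transl = d - A0 *v d"

lemma xi_A0: "xi (d, D) (m, A0) = (D *v m + transl, A0)"
  using D_A0_D_inv unfolding xi_eq transl_def by simp

lemma transl_int_vecs: "transl \<in> int_vecs"
  using xi_Gamma[of "(0, A0)"] by (simp add: xi_A0 mem_Gamma_iff)

lemma A0_transl: "A0 *v transl = - transl"
  unfolding transl_def by (simp add: matrix_vector_mult_diff_distrib)

lemma matrix_inv_D_int_vecs:
  assumes "w \<in> int_vecs" shows "matrix_inv D *v w \<in> int_vecs"
proof -
  obtain z B where zB: "(z, B) \<in> Gamma" "xi (d, D) (z, B) = (w, mat 1)"
  proof -
    have "(w, mat 1) \<in> xi (d, D) ` Gamma" using bij assms by (simp add: bij_betw_def mem_Gamma_iff)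
    then show ?thesis using that by auto
  qed
  then have "B = mat 1" using A0_neq_mat1 by (auto simp: mem_Gamma_iff xi_A0)
  then have "D *v z = w" using zB(2) by (simp add: xi_mat1)
  then have "matrix_inv D *v w = z"
    using D_matrix_inv by (metis matrix_vector_mul_assoc matrix_vector_mul_lid)
  then show ?thesis using zB(1) by (simp add: mem_Gamma_iff)
qed

lemma det_D: "det D = 1 \<or> det D = -1"
proof -
  have "det D * det (matrix_inv D) = 1" using D_matrix_inv det_mul[of D "matrix_inv D"] by simp
  then show ?thesis
    using Ints_mult_eq_1_imp Ints_det_3 Ints_matrix_nth D_int_vecs matrix_inv_D_int_vecs by blast
qed

text \<open>Commuting with \<open>A\<^sub>0\<close> and \<open>det D = \<plusminus>1\<close> force this shape.\<close>
lemma D_entries: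
  obtains a b c i j :: int where "a = 1 \<or> a = -1" "odd j"
   "D$1$1 = of_int a" "D$1$2 = of_int b" "D$1$3 = of_int c"
   "D$2$1 = 0" "D$2$2 = of_int (a + 2*b)" "D$2$3 = of_int (2*c)"
   "D$3$1 = 0" "D$3$2 = of_int i" "D$3$3 = of_int j"
proof -
  have "(D ** A0)$1$1 = (A0 ** D)$1$1" "(D ** A0)$3$1 = (A0 ** D)$3$1"
     "(D ** A0)$1$2 = (A0 ** D)$1$2" "(D ** A0)$1$3 = (A0 ** D)$1$3" using D_A0_commute by simp_all
  then have e: "D$2$1 = 0" "D$3$1 = 0" "D$2$2 = D$1$1 + 2 * D$1$2" "D$2$3 = 2 * D$1$3"
    by (simp_all add: matrix_matrix_mult_3)
  have Ints: "D$i$k \<in> \<int>" for i k by (rule Ints_matrix_nth) (rule D_int_vecs)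
  obtain a where a: "D$1$1 = of_int a" using Ints[of 1 1] by (auto elim: Ints_cases)
  obtain b where b: "D$1$2 = of_int b" using Ints[of 1 2] by (auto elim: Ints_cases)
  obtain c where c: "D$1$3 = of_int c" using Ints[of 1 3] by (auto elim: Ints_cases)
  obtain i where i: "D$3$2 = of_int i" using Ints[of 3 2] by (auto elim: Ints_cases)
  obtain j where j: "D$3$3 = of_int j" using Ints[of 3 3] by (auto elim: Ints_cases)
  have "det D = of_int (a * ((a + 2*b)*j - 2*c*i))"
    unfolding det_3 using e a b c i j by (simp add: algebra_simps)
  then have "a * ((a + 2*b)*j - 2*c*i) = 1 \<or> a * ((a + 2*b)*j - 2*c*i) = -1"
    using det_D by (metis of_int_eq_1_iff of_int_eq_iff of_int_minus of_int_1)
  then have u: "(a = 1 \<or> a = -1) \<and> ((a + 2*b)*j - 2*c*i = 1 \<or> (a + 2*b)*j - 2*c*i = -1)"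
    using zmult_eq_1_iff[of a] zmult_eq_1_iff[of "-a"] by (auto simp: minus_equation_iff[of "_ * _"])
  then have "odd ((a + 2*b)*j - 2*c*i)" by (metis even_minus odd_one)
  then have j_odd: "odd j" by auto
  show ?thesis
    by (rule that[where a = a and b = b and c = c and i = i and j = j]) (use u e a b c i j j_odd in simp_all)
qed

end

section \<open>Twisted conjugacy on the cosets of \<open>\<int>\<^sup>3\<close>\<close>

definition twisted_cong :: "(real^3^3) \<Rightarrow> (real^3) \<Rightarrow> ((real^3) \<times> (real^3)) set" where
  "twisted_cong E u = {(z, z'). z \<in> int_vecs \<and> z' \<in> int_vecs \<and>
     (\<exists>m\<in>int_vecs. z = z' + E *v m \<or> z = E *v m + A0 *v z' - u)}"

lemma twisted_cong_refl: "z \<in> int_vecs \<Longrightarrow> (z, z) \<in> twisted_cong E u"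
  unfolding twisted_cong_def by (auto intro: bexI[of _ 0])

context Gamma_automorphism
begin

abbreviation reid :: "(aff3 \<times> aff3) set" where
  "reid \<equiv> reid_rel Gamma (xi (d, D))"

lemma reid_rel_step:
  assumes "C = mat 1 \<or> C = A0" "B = mat 1 \<or> B = A0"
  shows "aff_mul (aff_mul (m, C) (z', B)) (aff_inv (xi (d, D) (m, C))) =
     (m + C *v z' - B *v (D *v m + (if C = A0 then transl else 0)), B)"
  using assms A0_neq_mat1
  by (auto simp: xi_mat1 xi_A0 aff_mul_def aff_inv_def matrix_vector_mult_uminus_right
      matrix_vector_mul_assoc[symmetric] matrix_mul_assoc[symmetric])

lemma reid_rel_step_iff:
  assumes B: "B = mat 1 \<or> B = A0"
  shows "(\<exists>C. (C = mat 1 \<or> C = A0) \<and>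
      z = m + C *v z' - B *v (D *v m + (if C = A0 then transl else 0))) \<longleftrightarrow>
    z = z' + (mat 1 - B ** D) *v m \<or> z = (mat 1 - B ** D) *v m + A0 *v z' - B *v transl"
proof -
  have E: "(mat 1 - B ** D) *v m = m - B *v (D *v m)"
    by (simp add: matrix_vector_mult_diff_rdistrib matrix_vector_mul_assoc)
  have step: "m + mat 1 *v z' - B *v (D *v m + (if mat 1 = A0 then transl else 0))
      = z' + (mat 1 - B ** D) *v m"
    "m + A0 *v z' - B *v (D *v m + (if A0 = A0 then transl else 0))
      = (mat 1 - B ** D) *v m + A0 *v z' - B *v transl"
    using A0_neq_mat1 unfolding E by (simp_all add: matrix_vector_right_distrib algebra_simps)
  show ?thesis
  proof
    assume "\<exists>C. (C = mat 1 \<or> C = A0) \<and>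
      z = m + C *v z' - B *v (D *v m + (if C = A0 then transl else 0))"
    then show "z = z' + (mat 1 - B ** D) *v m \<or> z = (mat 1 - B ** D) *v m + A0 *v z' - B *v transl"
      using step by auto
  next
    assume "z = z' + (mat 1 - B ** D) *v m \<or> z = (mat 1 - B ** D) *v m + A0 *v z' - B *v transl"
    then show "\<exists>C. (C = mat 1 \<or> C = A0) \<and>
      z = m + C *v z' - B *v (D *v m + (if C = A0 then transl else 0))"
    proof
      assume "z = z' + (mat 1 - B ** D) *v m"
      then show ?thesis using step(1) by (intro exI[of _ "mat 1"]) simp
    next
      assume "z = (mat 1 - B ** D) *v m + A0 *v z' - B *v transl"
      then show ?thesis using step(2) by (intro exI[of _ A0]) simp
    qed
  qed
qed

lemma reid_rel_iff:
  assumes "(z, B) \<in> Gamma" "(z', B') \<in> Gamma"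
  shows "((z, B), (z', B')) \<in> reid \<longleftrightarrow>
    B = B' \<and> (z, z') \<in> twisted_cong (mat 1 - B' ** D) (B' *v transl)"
proof -
  have B': "B' = mat 1 \<or> B' = A0" and zz': "z \<in> int_vecs" "z' \<in> int_vecs"
    using assms by (auto simp: mem_Gamma_iff)
  let ?step = "\<lambda>m C. m + C *v z' - B' *v (D *v m + (if C = A0 then transl else 0))"
  have "((z, B), (z', B')) \<in> reid \<longleftrightarrow>
      (\<exists>h\<in>Gamma. (z, B) = aff_mul (aff_mul h (z', B')) (aff_inv (xi (d, D) h)))"
    unfolding reid_rel_def using assms by auto
  also have "\<dots> \<longleftrightarrow> B = B' \<and> (\<exists>m\<in>int_vecs. \<exists>C. (C = mat 1 \<or> C = A0) \<and> z = ?step m C)"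
  proof
    assume "\<exists>h\<in>Gamma. (z, B) = aff_mul (aff_mul h (z', B')) (aff_inv (xi (d, D) h))"
    then obtain m C where "(m, C) \<in> Gamma"
      "(z, B) = aff_mul (aff_mul (m, C) (z', B')) (aff_inv (xi (d, D) (m, C)))" by auto
    then show "B = B' \<and> (\<exists>m\<in>int_vecs. \<exists>C. (C = mat 1 \<or> C = A0) \<and> z = ?step m C)"
      using reid_rel_step[OF _ B'] by (auto simp: mem_Gamma_iff)
  next
    assume "B = B' \<and> (\<exists>m\<in>int_vecs. \<exists>C. (C = mat 1 \<or> C = A0) \<and> z = ?step m C)"
    then obtain m C where "B = B'" "m \<in> int_vecs" "C = mat 1 \<or> C = A0" "z = ?step m C" by blast
    then show "\<exists>h\<in>Gamma. (z, B) = aff_mul (aff_mul h (z', B')) (aff_inv (xi (d, D) h))"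
      using reid_rel_step[of C B' m z'] B' by (intro bexI[of _ "(m, C)"]) (auto simp: mem_Gamma_iff)
  qed
  also have "\<dots> \<longleftrightarrow> B = B' \<and> (z, z') \<in> twisted_cong (mat 1 - B' ** D) (B' *v transl)"
    unfolding reid_rel_step_iff[OF B'] twisted_cong_def using zz' by simp
  finally show ?thesis .
qed

definition coset_classes :: "(real^3^3) \<Rightarrow> (real^3) set set" where
  "coset_classes B = int_vecs // twisted_cong (mat 1 - B ** D) (B *v transl)"

lemma coset_quotient_bij:
  assumes B: "B \<in> holonomy Gamma"
  defines "S \<equiv> (\<lambda>z. (z, B)) ` int_vecs"
  shows "card (S // (reid \<inter> S \<times> S)) = card (coset_classes B)"
    and "finite (S // (reid \<inter> S \<times> S)) \<longleftrightarrow> finite (coset_classes B)"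
proof -
  have S: "S \<subseteq> Gamma" using B unfolding S_def holonomy_Gamma by (auto simp: mem_Gamma_iff)
  have img: "(\<lambda>z. (z, B)) ` int_vecs = S" by (simp add: S_def)
  have sub: "twisted_cong (mat 1 - B ** D) (B *v transl) \<subseteq> int_vecs \<times> int_vecs"
    "reid \<inter> S \<times> S \<subseteq> S \<times> S" by (auto simp: twisted_cong_def)
  have iff: "(x, y) \<in> twisted_cong (mat 1 - B ** D) (B *v transl) \<longleftrightarrow>
      ((x, B), (y, B)) \<in> reid \<inter> S \<times> S" if "x \<in> int_vecs" "y \<in> int_vecs" for x y
  proof -
    have "(x, B) \<in> S" "(y, B) \<in> S" using that by (simp_all add: S_def)
    then show ?thesis using reid_rel_iff[of x B y B] S by auto
  qed
  show "card (S // (reid \<inter> S \<times> S)) = card (coset_classes B)"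
    using card_quotient_image[OF img sub iff] unfolding coset_classes_def by simp
  show "finite (S // (reid \<inter> S \<times> S)) \<longleftrightarrow> finite (coset_classes B)"
    using finite_quotient_image_iff[OF img sub iff] unfolding coset_classes_def by simp
qed

lemma
  shows finite_Reidemeister_classes_iff:
      "finite (Gamma // reid) \<longleftrightarrow> finite (coset_classes (mat 1)) \<and> finite (coset_classes A0)"
    and card_Reidemeister_classes: "finite (Gamma // reid) \<Longrightarrow>
      card (Gamma // reid) = card (coset_classes (mat 1)) + card (coset_classes A0)"
proof -
  define S1 where "S1 = (\<lambda>z. (z, mat 1 :: real^3^3)) ` int_vecs"
  define S2 where "S2 = (\<lambda>z. (z, A0)) ` int_vecs"
  have Gamma: "Gamma = S1 \<union> S2" unfolding Gamma_eq S1_def S2_def by auto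
  have disj: "S1 \<inter> S2 = {}" unfolding S1_def S2_def using A0_neq_mat1 by auto
  have reid_sub: "reid \<subseteq> S1 \<times> S1 \<union> S2 \<times> S2"
  proof
    fix p assume p: "p \<in> reid"
    then obtain z B z' B' where "p = ((z, B), (z', B'))" "(z, B) \<in> Gamma" "(z', B') \<in> Gamma"
      unfolding reid_rel_def by auto
    then show "p \<in> S1 \<times> S1 \<union> S2 \<times> S2"
      using p reid_rel_iff unfolding S1_def S2_def by (auto simp: mem_Gamma_iff)
  qed
  have "(x, x) \<in> reid" if "x \<in> S1 \<union> S2" for x
    using that reid_rel_iff twisted_cong_refl unfolding S1_def S2_def by (auto simp: mem_Gamma_iff)
  note split = quotient_Un_disjoint[OF disj reid_sub this]
  from split(1) have Q: "Gamma // reid = S1 // (reid \<inter> S1 \<times> S1) \<union> S2 // (reid \<inter> S2 \<times> S2)"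
    by (simp only: Gamma[symmetric])
  have B: "mat 1 \<in> holonomy Gamma" "A0 \<in> holonomy Gamma" unfolding holonomy_Gamma by simp_all
  note cosets = coset_quotient_bij[OF B(1), folded S1_def] coset_quotient_bij[OF B(2), folded S2_def]
  show "finite (Gamma // reid) \<longleftrightarrow> finite (coset_classes (mat 1)) \<and> finite (coset_classes A0)"
    unfolding Q using cosets by simp
  show "card (Gamma // reid) = card (coset_classes (mat 1)) + card (coset_classes A0)"
    if "finite (Gamma // reid)"
    using that unfolding Q using cosets card_Un_disjoint[OF _ _ split(2)] by simp
qed

end

section \<open>Counting the classes of a coset\<close>

lemma left_null_eigenvector:
  fixes E P :: "real^'n^'n"
  assumes det: "det E = 0" and comm: "E ** P = P ** E" and invol: "P ** P = mat 1"
  obtains \<eta> :: "real^'n" and \<epsilon> :: real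
  where "\<eta> \<noteq> 0" "\<eta> v* E = 0" "\<eta> v* P = \<epsilon> *\<^sub>R \<eta>" "\<epsilon> = 1 \<or> \<epsilon> = -1"
proof -
  have "\<not> invertible (transpose E)" using det invertible_det_nz[of "transpose E"] by simp
  then have "\<not> (\<exists>B. B ** transpose E = mat 1)" using invertible_left_inverse by blast
  then obtain \<mu> where "transpose E *v \<mu> = 0" "\<mu> \<noteq> 0" using matrix_left_invertible_ker by blast
  then have \<mu>: "\<mu> \<noteq> 0" "\<mu> v* E = 0" by auto
  define \<nu> where "\<nu> = \<mu> v* P"
  have "\<nu> v* E = (\<mu> v* E) v* P" unfolding \<nu>_def using comm by (simp add: vector_matrix_mul_assoc)
  then have \<nu>E: "\<nu> v* E = 0" using \<mu> by simp
  have \<nu>P: "\<nu> v* P = \<mu>" unfolding \<nu>_def using invol by (simp add: vector_matrix_mul_assoc)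
  show ?thesis
  proof (cases "\<mu> + \<nu> = 0")
    case True
    then have "\<nu> = - \<mu>" by (simp add: eq_neg_iff_add_eq_0 add.commute)
    then have "\<mu> - \<nu> = 2 *\<^sub>R \<mu>" by (simp add: scaleR_2)
    then have "\<mu> - \<nu> \<noteq> 0" using \<mu>(1) by simp
    moreover have "(\<mu> - \<nu>) v* E = 0" using \<mu> \<nu>E by (simp add: vector_matrix_mult_diff_distrib)
    moreover have "(\<mu> - \<nu>) v* P = (-1) *\<^sub>R (\<mu> - \<nu>)"
      using \<nu>P by (simp add: vector_matrix_mult_diff_distrib \<nu>_def)
    ultimately show ?thesis using that by blast
  next
    case False
    moreover have "(\<mu> + \<nu>) v* E = 0" using \<mu> \<nu>E by (simp add: vector_matrix_left_distrib)
    moreover have "(\<mu> + \<nu>) v* P = 1 *\<^sub>R (\<mu> + \<nu>)"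
      using \<nu>P by (simp add: vector_matrix_left_distrib \<nu>_def)
    ultimately show ?thesis using that by blast
  qed
qed

lemma finite_image_class_invariant:
  assumes fin: "finite (A // r)" and inv: "\<And>x y. (x, y) \<in> r \<Longrightarrow> f x = f y"
    and refl: "\<And>x. x \<in> A \<Longrightarrow> (x, x) \<in> r"
  shows "finite (f ` A)"
proof -
  have "f ` A \<subseteq> (\<lambda>C. f (SOME z. z \<in> C)) ` (A // r)"
  proof
    fix y assume "y \<in> f ` A"
    then obtain x where x: "x \<in> A" "y = f x" by auto
    have "x \<in> r``{x}" using refl x by auto
    then have "(SOME z. z \<in> r``{x}) \<in> r``{x}" by (rule someI)
    then have "f (SOME z. z \<in> r``{x}) = y" using inv x by auto
    moreover have "r``{x} \<in> A // r" using x(1) by (rule quotientI)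
    ultimately show "y \<in> (\<lambda>C. f (SOME z. z \<in> C)) ` (A // r)" by force
  qed
  then show ?thesis using fin finite_subset by blast
qed

lemma infinite_image_abs_inner_int_vecs:
  fixes \<eta> :: "real^3" assumes "\<eta> \<noteq> 0" "a \<noteq> 0"
  shows "infinite ((\<lambda>z. \<bar>a * inner \<eta> z + c\<bar>) ` int_vecs)"
proof
  assume fin: "finite ((\<lambda>z. \<bar>a * inner \<eta> z + c\<bar>) ` int_vecs)"
  obtain k where k: "\<eta>$k \<noteq> 0" using assms(1) by (metis vec_eq_iff zero_index)
  define M where "M = Max ((\<lambda>z. \<bar>a * inner \<eta> z + c\<bar>) ` int_vecs)"
  have pos: "0 < \<bar>a * \<eta>$k\<bar>" using k assms(2) by simp
  obtain n :: nat where "(M + \<bar>c\<bar>) / \<bar>a * \<eta>$k\<bar> < of_nat n"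
    using reals_Archimedean2 by blast
  then have n: "M + \<bar>c\<bar> < \<bar>a * \<eta>$k\<bar> * of_nat n" using pos by (simp add: divide_less_eq mult.commute)
  have "axis k (of_nat n) \<in> int_vecs" unfolding int_vecs_def by (auto simp: axis_def)
  then have "\<bar>a * inner \<eta> (axis k (of_nat n)) + c\<bar> \<le> M"
    unfolding M_def using fin by (auto intro: Max_ge)
  then have "\<bar>a * (\<eta>$k * of_nat n) + c\<bar> \<le> M" by (simp add: inner_axis)
  moreover have "\<bar>a * (\<eta>$k * of_nat n)\<bar> = \<bar>a * \<eta>$k\<bar> * of_nat n" by (simp add: abs_mult)
  moreover have "\<bar>a * (\<eta>$k * of_nat n)\<bar> - \<bar>c\<bar> \<le> \<bar>a * (\<eta>$k * of_nat n) + c\<bar>"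
    using abs_triangle_ineq2[of "a * (\<eta>$k * of_nat n)" "- c"] by simp
  ultimately show False using n by linarith
qed

text \<open>
  A left null vector \<open>\<eta>\<close> of \<open>E\<close> with \<open>\<eta> A\<^sub>0 = \<plusminus>\<eta>\<close> makes \<open>|2 \<eta>\<cdot>z + \<eta>\<cdot>u|\<close> a class
  invariant, and it is unbounded on \<open>\<int>\<^sup>3\<close>.
\<close>
lemma infinite_twisted_cong_classes:
  assumes det: "det E = 0" and comm: "E ** A0 = A0 ** E" and u: "A0 *v u = - u"
  shows "infinite (int_vecs // twisted_cong E u)"
proof
  assume fin: "finite (int_vecs // twisted_cong E u)"
  obtain \<eta> \<epsilon> where \<eta>: "\<eta> \<noteq> 0" "\<eta> v* E = 0" "\<eta> v* A0 = \<epsilon> *\<^sub>R \<eta>" "\<epsilon> = 1 \<or> \<epsilon> = -1"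
    using left_null_eigenvector[OF det comm A0_mult_A0] by blast
  have \<eta>E: "inner \<eta> (E *v m) = 0" for m using \<eta>(2) dot_lmul_matrix[of \<eta> E m] by simp
  have \<eta>A: "inner \<eta> (A0 *v z) = \<epsilon> * inner \<eta> z" for z using \<eta>(3) dot_lmul_matrix[of \<eta> A0 z] by simp
  have \<eta>u: "\<epsilon> = 1 \<Longrightarrow> inner \<eta> u = 0" using \<eta>A[of u] u by (simp add: inner_minus_right)
  have invariant: "\<bar>2 * inner \<eta> z + inner \<eta> u\<bar> = \<bar>2 * inner \<eta> z' + inner \<eta> u\<bar>"
    if "(z, z') \<in> twisted_cong E u" for z z'
  proof -
    from that obtain m where "z = z' + E *v m \<or> z = E *v m + A0 *v z' - u"
      unfolding twisted_cong_def by blast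
    then show ?thesis
    proof
      assume "z = z' + E *v m" then show ?thesis by (simp add: inner_add_right \<eta>E)
    next
      assume "z = E *v m + A0 *v z' - u"
      then have "inner \<eta> z = \<epsilon> * inner \<eta> z' - inner \<eta> u"
        by (simp add: inner_add_right inner_diff_right \<eta>E \<eta>A)
      then show ?thesis using \<eta>(4) \<eta>u by auto
    qed
  qed
  have "finite ((\<lambda>z. \<bar>2 * inner \<eta> z + inner \<eta> u\<bar>) ` int_vecs)"
    using finite_image_class_invariant[OF fin, of "\<lambda>z. \<bar>2 * inner \<eta> z + inner \<eta> u\<bar>"]
      invariant twisted_cong_refl by blast
  then show False using infinite_image_abs_inner_int_vecs[OF \<eta>(1)] by simp
qed

definition int_triple_vec :: "int \<times> int \<times> int \<Rightarrow> real^3" where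
  "int_triple_vec z = vector [of_int (fst z), of_int (fst (snd z)), of_int (snd (snd z))]"

lemma int_triple_vec_nth [simp]:
  "int_triple_vec z $ 1 = of_int (fst z)" "int_triple_vec z $ 2 = of_int (fst (snd z))"
  "int_triple_vec z $ 3 = of_int (snd (snd z))"
  unfolding int_triple_vec_def by simp_all

lemma range_int_triple_vec: "range int_triple_vec = int_vecs"
proof
  show "range int_triple_vec \<subseteq> int_vecs" unfolding int_vecs_def by (auto simp: forall_3)
  show "int_vecs \<subseteq> range int_triple_vec"
  proof
    fix z assume "z \<in> int_vecs"
    then have "z$1 \<in> \<int>" "z$2 \<in> \<int>" "z$3 \<in> \<int>" unfolding int_vecs_def by auto
    then obtain x y w where "z$1 = of_int x" "z$2 = of_int y" "z$3 = of_int w" by (metis Ints_cases)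
    then have "z = int_triple_vec (x, y, w)" by (simp add: vec3_eq_iff)
    then show "z \<in> range int_triple_vec" by blast
  qed
qed

lemma int_triple_vec_eq_add_iff:
  "int_triple_vec z = int_triple_vec z' + int_triple_vec w \<longleftrightarrow>
     fst z - fst z' = fst w \<and> fst (snd z) - fst (snd z') = fst (snd w) \<and>
     snd (snd z) - snd (snd z') = snd (snd w)"
proof -
  have "int_triple_vec z = int_triple_vec z' + int_triple_vec w \<longleftrightarrow>
    real_of_int (fst z) = of_int (fst z') + of_int (fst w) \<and>
    real_of_int (fst (snd z)) = of_int (fst (snd z')) + of_int (fst (snd w)) \<and>
    real_of_int (snd (snd z)) = of_int (snd (snd z')) + of_int (snd (snd w))"
    by (simp add: vec3_eq_iff)
  also have "\<dots> \<longleftrightarrow> fst z - fst z' = fst w \<and> fst (snd z) - fst (snd z') = fst (snd w) \<and>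
      snd (snd z) - snd (snd z') = snd (snd w)"
    by (simp only: of_int_add[symmetric] of_int_eq_iff, arith)
  finally show ?thesis .
qed

definition reduced_shape :: "real^3^3 \<Rightarrow> int \<Rightarrow> int \<Rightarrow> int \<Rightarrow> int \<Rightarrow> bool" where
  "reduced_shape E b c i j \<longleftrightarrow> E$1$1 = -1 \<and> E$1$2 = of_int b \<and> E$1$3 = of_int c \<and>
     E$2$1 = 0 \<and> E$2$2 = of_int (2*b - 1) \<and> E$2$3 = of_int (2*c) \<and>
     E$3$1 = 0 \<and> E$3$2 = of_int i \<and> E$3$3 = of_int j"

lemma reduced_shape_I_minus_mult:
  assumes "reduced_shape E b c i j"
  shows "(mat 1 - E) *v int_triple_vec m = int_triple_vec
     (2 * fst m - b * fst (snd m) - c * snd (snd m),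
      (2 - 2 * b) * fst (snd m) - 2 * c * snd (snd m), - i * fst (snd m) + (1 - j) * snd (snd m))"
proof -
  have E: "E$1$1 = -1" "E$1$2 = of_int b" "E$1$3 = of_int c" "E$2$1 = 0" "E$2$2 = of_int (2*b - 1)"
    "E$2$3 = of_int (2*c)" "E$3$1 = 0" "E$3$2 = of_int i" "E$3$3 = of_int j"
    using assms unfolding reduced_shape_def by auto
  show ?thesis by (simp add: E vec3_eq_iff matrix_vector_mult_3 algebra_simps)
qed

lemma det_I_minus_reduced_shape:
  assumes "reduced_shape E b c i j"
  shows "det (mat 1 - E) = 2 * of_int ((2 - 2 * b) * (1 - j) - (- 2 * c) * (- i))"
proof -
  have E: "E$1$1 = -1" "E$1$2 = of_int b" "E$1$3 = of_int c" "E$2$1 = 0" "E$2$2 = of_int (2*b - 1)"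
    "E$2$3 = of_int (2*c)" "E$3$1 = 0" "E$3$2 = of_int i" "E$3$3 = of_int j"
    using assms unfolding reduced_shape_def by auto
  show ?thesis unfolding det_3 by (simp add: E algebra_simps)
qed

lemma twisted_cong_int_triple_vec_iff:
  fixes t0 e0 :: int
  assumes shape: "reduced_shape E b c i j"
  defines "u \<equiv> vector [of_int t0, of_int (2 * t0), of_int e0] :: real^3"
  shows "(int_triple_vec z, int_triple_vec z') \<in> twisted_cong (mat 1 - E) u \<longleftrightarrow>
    lattice_cong3 b c i j z z' \<or> lattice_cong3 b c i j z (twist t0 e0 z')"
proof -
  have cong3: "(\<exists>m\<in>int_vecs. int_triple_vec z = int_triple_vec z'' + (mat 1 - E) *v m) \<longleftrightarrow>
      lattice_cong3 b c i j z z''" for z''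
  proof -
    have "(\<exists>m\<in>int_vecs. int_triple_vec z = int_triple_vec z'' + (mat 1 - E) *v m) \<longleftrightarrow>
        (\<exists>m. int_triple_vec z = int_triple_vec z'' + (mat 1 - E) *v int_triple_vec m)"
      unfolding range_int_triple_vec[symmetric] by blast
    also have "\<dots> \<longleftrightarrow> lattice_cong3 b c i j z z''"
      unfolding reduced_shape_I_minus_mult[OF shape] int_triple_vec_eq_add_iff lattice_cong3_def
      by auto
    finally show ?thesis .
  qed
  have "A0 *v int_triple_vec z' - u = int_triple_vec (twist t0 e0 z')"
    unfolding twist_def u_def by (simp add: vec3_eq_iff)
  then have twisted: "(mat 1 - E) *v m + A0 *v int_triple_vec z' - u =
      int_triple_vec (twist t0 e0 z') + (mat 1 - E) *v m" for m
    by (simp add: algebra_simps)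
  have "(int_triple_vec z, int_triple_vec z') \<in> twisted_cong (mat 1 - E) u \<longleftrightarrow>
    int_triple_vec z \<in> int_vecs \<and> int_triple_vec z' \<in> int_vecs \<and>
    (\<exists>m\<in>int_vecs. int_triple_vec z = int_triple_vec z' + (mat 1 - E) *v m \<or>
       int_triple_vec z = (mat 1 - E) *v m + A0 *v int_triple_vec z' - u)"
    unfolding twisted_cong_def by simp
  also have "\<dots> \<longleftrightarrow> (\<exists>m\<in>int_vecs. int_triple_vec z = int_triple_vec z' + (mat 1 - E) *v m) \<or>
      (\<exists>m\<in>int_vecs. int_triple_vec z = int_triple_vec (twist t0 e0 z') + (mat 1 - E) *v m)"
    using range_int_triple_vec by (auto simp only: twisted bex_disj_distrib)
  finally show ?thesis unfolding cong3 .
qed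

lemma
  fixes t0 e0 :: int
  assumes shape: "reduced_shape E b c i j" and odd: "odd j" and det: "det (mat 1 - E) \<noteq> 0"
  defines "u \<equiv> vector [of_int t0, of_int (2 * t0), of_int e0] :: real^3"
  shows finite_twisted_cong_classes: "finite (int_vecs // twisted_cong (mat 1 - E) u)"
    and card_twisted_cong_classes:
      "real (card (int_vecs // twisted_cong (mat 1 - E) u)) =
         \<bar>det (mat 1 - E)\<bar> / 2 + (if even e0 then 2 else 0)"
proof -
  let ?rel = "{(z, z'). lattice_cong3 b c i j z z' \<or> lattice_cong3 b c i j z (twist t0 e0 z')}"
  have det': "(2 - 2 * b) * (1 - j) - (- 2 * c) * (- i) \<noteq> 0"
  proof
    assume "(2 - 2 * b) * (1 - j) - (- 2 * c) * (- i) = 0"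
    then have "det (mat 1 - E) = 0" unfolding det_I_minus_reduced_shape[OF shape] by simp
    then show False using det by simp
  qed
  have sub: "?rel \<subseteq> UNIV \<times> UNIV" "twisted_cong (mat 1 - E) u \<subseteq> int_vecs \<times> int_vecs"
    by (auto simp: twisted_cong_def)
  have iff: "(z, z') \<in> ?rel \<longleftrightarrow> (int_triple_vec z, int_triple_vec z') \<in> twisted_cong (mat 1 - E) u"
    for z z' unfolding u_def using twisted_cong_int_triple_vec_iff[OF shape] by simp
  note transfer = card_quotient_image[OF range_int_triple_vec sub iff]
    finite_quotient_image_iff[OF range_int_triple_vec sub iff]
  show "finite (int_vecs // twisted_cong (mat 1 - E) u)"
    using transfer finite_lattice_cong3_twisted_classes[OF odd det'] by simp
  show "real (card (int_vecs // twisted_cong (mat 1 - E) u)) =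
      \<bar>det (mat 1 - E)\<bar> / 2 + (if even e0 then 2 else 0)"
  proof -
    have card: "card (int_vecs // twisted_cong (mat 1 - E) u) =
        nat \<bar>(2 - 2 * b) * (1 - j) - (- 2 * c) * (- i)\<bar> + (if even e0 then 2 else 0)"
      using transfer card_lattice_cong3_twisted_classes[OF odd det'] by simp
    have half: "\<bar>2 * real_of_int \<Delta>\<bar> / 2 = real (nat \<bar>\<Delta>\<bar>)" for \<Delta> :: int
      by (simp add: abs_mult)
    show ?thesis unfolding det_I_minus_reduced_shape[OF shape] half card by simp
  qed
qed

context Gamma_automorphism
begin

lemma coset_transl:
  assumes "B \<in> holonomy Gamma"
  obtains t0 e0 :: int
  where "B *v transl = vector [of_int t0, of_int (2 * t0), of_int e0]" "even e0 \<longleftrightarrow> d $ 3 \<in> \<int>"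
proof -
  have t: "transl$1 = d$2" "transl$2 = 2 * d$2" "transl$3 = 2 * d$3" unfolding transl_def by simp_all
  have "transl$1 \<in> \<int>" "transl$3 \<in> \<int>" using transl_int_vecs unfolding int_vecs_def by blast+
  then obtain t0 e0 where t0: "d$2 = of_int t0" and e0: "2 * d$3 = of_int e0"
    using t by (auto elim!: Ints_cases)
  have transl: "transl = vector [of_int t0, of_int (2 * t0), of_int e0]"
    using t t0 e0 by (simp add: vec3_eq_iff)
  have even: "even e0 \<longleftrightarrow> d$3 \<in> \<int>"
  proof
    assume "even e0"
    then obtain k where "e0 = 2 * k" by blast
    then have "d$3 = of_int k" using e0 by simp
    then show "d$3 \<in> \<int>" by simp
  next
    assume "d$3 \<in> \<int>"
    then obtain k where "d$3 = of_int k" by (auto elim!: Ints_cases)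
    then have "real_of_int e0 = of_int (2 * k)" using e0 by simp
    then have "e0 = 2 * k" by (simp only: of_int_eq_iff)
    then show "even e0" by simp
  qed
  from assms consider "B = mat 1" | "B = A0" unfolding holonomy_Gamma by auto
  then show ?thesis
  proof cases
    case 1
    then show ?thesis using that[of t0 e0] transl even by simp
  next
    case 2
    have "A0 *v transl = vector [of_int (- t0), of_int (2 * - t0), of_int (- e0)]"
      unfolding A0_transl transl by (simp add: vec3_eq_iff)
    then show ?thesis using that[of "- t0" "- e0"] 2 even by simp
  qed
qed

lemma coset_matrix_shape:
  assumes B: "B \<in> holonomy Gamma" and det: "det (mat 1 - B ** D) \<noteq> 0"
  obtains b c i j where "reduced_shape (B ** D) b c i j" "odd j"
proof -
  obtain a b c i j :: int where D: "a = 1 \<or> a = -1" "odd j"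
    "D$1$1 = of_int a" "D$1$2 = of_int b" "D$1$3 = of_int c"
    "D$2$1 = 0" "D$2$2 = of_int (a + 2*b)" "D$2$3 = of_int (2*c)"
    "D$3$1 = 0" "D$3$2 = of_int i" "D$3$3 = of_int j"
    by (rule D_entries)
  from B consider "B = mat 1" | "B = A0" unfolding holonomy_Gamma by auto
  then show ?thesis
  proof cases
    case 1
    have "det (mat 1 - D) = of_int ((1 - a) * ((1 - a - 2*b) * (1 - j) - 2*c*i))"
      unfolding det_3 by (simp add: D(3-) algebra_simps)
    then have "a = -1" using det D(1) 1 by auto
    then show ?thesis using that[of b c i j] D 1 unfolding reduced_shape_def by simp
  next
    case 2
    have "det (mat 1 - A0 ** D) = of_int ((1 - a) * ((1 + a + 2*b) * (1 + j) - 2*c*i))"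
      unfolding det_3 by (simp add: D(3-) matrix_matrix_mult_3 algebra_simps)
    then have "a = -1" using det D(1) 2 by auto
    then show ?thesis using that[of "1 - b" "- c" "- i" "- j"] D 2 unfolding reduced_shape_def
      by (simp add: matrix_matrix_mult_3 algebra_simps)
  qed
qed

lemma
  assumes B: "B \<in> holonomy Gamma" and det: "det (mat 1 - B ** D) \<noteq> 0"
  shows finite_coset_classes: "finite (coset_classes B)"
    and card_coset_classes: "real (card (coset_classes B)) =
      \<bar>det (mat 1 - B ** D)\<bar> / 2 + (if d $ 3 \<in> \<int> then 2 else 0)"
proof -
  obtain b c i j where shape: "reduced_shape (B ** D) b c i j" "odd j"
    using coset_matrix_shape[OF B det] .
  obtain t0 e0 where transl: "B *v transl = vector [of_int t0, of_int (2 * t0), of_int e0]"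
    and even: "even e0 \<longleftrightarrow> d $ 3 \<in> \<int>"
    using coset_transl[OF B] .
  show "finite (coset_classes B)"
    unfolding coset_classes_def transl by (rule finite_twisted_cong_classes[OF shape det])
  show "real (card (coset_classes B)) = \<bar>det (mat 1 - B ** D)\<bar> / 2 + (if d $ 3 \<in> \<int> then 2 else 0)"
    unfolding coset_classes_def transl card_twisted_cong_classes[OF shape det] even ..
qed

lemma infinite_coset_classes:
  assumes B: "B \<in> holonomy Gamma" and det: "det (mat 1 - B ** D) = 0"
  shows "infinite (coset_classes B)"
proof -
  from B have B: "B = mat 1 \<or> B = A0" unfolding holonomy_Gamma by auto
  have "B ** D ** A0 = A0 ** B ** D"
  proof -
    have "A0 ** D ** A0 = A0 ** A0 ** D" by (simp only: matrix_mul_assoc[symmetric] D_A0_commute)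
    then show ?thesis using B D_A0_commute by auto
  qed
  then have "(mat 1 - B ** D) ** A0 = A0 ** (mat 1 - B ** D)"
    by (simp add: matrix_diff_rdistrib matrix_diff_ldistrib matrix_mul_assoc)
  moreover have "A0 *v (B *v transl) = - (B *v transl)"
    using B A0_transl by (auto simp: matrix_vector_mult_uminus_right)
  ultimately show ?thesis unfolding coset_classes_def by (rule infinite_twisted_cong_classes[OF det])
qed

lemma reidemeister_number_infinite:
  assumes "det (mat 1 - D) = 0 \<or> det (mat 1 - A0 ** D) = 0"
  shows "reidemeister_number Gamma (xi (d, D)) = \<infinity>"
proof -
  have "mat 1 \<in> holonomy Gamma" "A0 \<in> holonomy Gamma" by (simp_all add: holonomy_Gamma)
  then have "infinite (Gamma // reid)"
    using assms infinite_coset_classes finite_Reidemeister_classes_iff by fastforce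
  then show ?thesis unfolding reidemeister_number_def by simp
qed

lemma reidemeister_number_finite:
  assumes "det (mat 1 - D) \<noteq> 0" "det (mat 1 - A0 ** D) \<noteq> 0"
  shows "reidemeister_number Gamma (xi (d, D)) = enat (card (Gamma // reid))"
    and "real (card (Gamma // reid)) =
      (\<bar>det (mat 1 - D)\<bar> + \<bar>det (mat 1 - A0 ** D)\<bar>) / 2 + 4 * (if d $ 3 \<in> \<int> then 1 else 0)"
proof -
  have hol: "mat 1 \<in> holonomy Gamma" "A0 \<in> holonomy Gamma" by (simp_all add: holonomy_Gamma)
  have fin: "finite (Gamma // reid)"
    using assms finite_coset_classes[OF hol(1)] finite_coset_classes[OF hol(2)]
      finite_Reidemeister_classes_iff by auto
  then show "reidemeister_number Gamma (xi (d, D)) = enat (card (Gamma // reid))"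
    unfolding reidemeister_number_def by simp
  show "real (card (Gamma // reid)) =
      (\<bar>det (mat 1 - D)\<bar> + \<bar>det (mat 1 - A0 ** D)\<bar>) / 2 + 4 * (if d $ 3 \<in> \<int> then 1 else 0)"
    using card_Reidemeister_classes[OF fin] card_coset_classes[OF hol(1)] card_coset_classes[OF hol(2)]
      assms by (simp add: add_divide_distrib)
qed

end

lemma half_ereal: "(1 / 2 :: ereal) = ereal (1 / 2)"
  by (simp add: divide_ereal_def)

theorem proposition5p12:
  fixes d :: "real^3" and D :: "real^3^3"
  assumes "(d, D) \<in> Aff3"
    and "bij_betw (xi (d, D)) Gamma Gamma"
  shows "ereal_of_enat (reidemeister_number Gamma (xi (d, D))) =
           (1/2) * (\<Sum>A\<in>holonomy Gamma. abs_inf (det (mat 1 - A ** D)))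
           + 4 * (if d $ 3 \<in> \<int> then 1 else 0)"
proof -
  interpret Gamma_automorphism d D using assms unfolding Aff3_def by unfold_locales auto
  have sum: "(\<Sum>A\<in>holonomy Gamma. abs_inf (det (mat 1 - A ** D))) =
      abs_inf (det (mat 1 - D)) + abs_inf (det (mat 1 - A0 ** D))"
    unfolding holonomy_Gamma using A0_neq_mat1 by simp
  show ?thesis
  proof (cases "det (mat 1 - D) = 0 \<or> det (mat 1 - A0 ** D) = 0")
    case True
    then have "abs_inf (det (mat 1 - D)) + abs_inf (det (mat 1 - A0 ** D)) = \<infinity>"
      by (auto simp: abs_inf_def)
    then show ?thesis unfolding sum reidemeister_number_infinite[OF True] half_ereal by simp
  next
    case False
    then show ?thesis using reidemeister_number_finite unfolding sum
      by (simp add: abs_inf_def half_ereal)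
  qed
qed

end
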